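(* Let $\hat\mu\in\mathbb{C}\setminus\{0\}$. If $(\hat\mu,\hat\phi)$ with $\hat\phi\in X\setminus\{0\}$ satisfies $\mathscr{U}\hat\phi=\hat\mu\hat\phi$, then $\mathcal{N}(\hat\mu)\hat{\bm v}=0$, where $\hat{\bm v}=(v_1^{\mathrm T}\,\cdots\,v_N^{\mathrm T})^{\mathrm T}\in\mathbb{C}^{Nd}$ is given by $v_n=x((n-1)\Delta;0,\hat\phi)$, $n=1,\ldots,N$. Conversely, if $\hat{\bm v}\in\mathbb{C}^{Nd}\setminus\{0\}$ satisfies $\mathcal{N}(\hat\mu)\hat{\bm v}=0$, then $\mathscr{U}\hat\phi=\hat\mu\hat\phi$, where \[ \hat\phi(t)=\hat\mu^{\lfloor (n-1)/N\rfloor}\,q_{((n-1)\bmod N)+1}\Big(\frac{t}{\Delta}-(n-1)\Big),\quad t\in((n-1)\Delta,n\Delta],\ n=-n_h+1,\ldots,0, \] and $\bm q(s)=(q_1^{\mathrm T}(s)\,\cdots\,q_N^{\mathrm T}(s))^{\mathrm T}$ is the solution of $\dot{\bm q}(s)=A(s,\hat\mu)\bm q(s)$, $s\in[0,1]$, $\bm q(0)=\hat{\bm v}$.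
   Context: Consider $\dot{x}(t)=\sum_{j=0}^h A_j(t)x(t-\tau_j)$ with $x(t)\in\mathbb{R}^d$, $A_j:\mathbb{R}\to\mathbb{R}^{d\times d}$ smooth and $T$-periodic ($T>0$), $0=\tau_0\le\tau_1<\cdots<\tau_h$, and $\Delta>0$, integers $N,n_j$ with $T=N\Delta$, $\tau_j=n_j\Delta$ ($n_0=0$). Let $X=C([-\tau_h,0],\mathbb{C}^d)$; $x(t;t_0,\phi)$ is the solution with initial function $\phi\in X$ at time $t_0$ (i.e. $x(t)=\phi(t-t_0)$ on $[t_0-\tau_h,t_0]$), and the monodromy operator is $\mathscr{U}\phi=x_T(\cdot;0,\phi)$, where $x_t(\theta;t_0,\phi)=x(t+\theta;t_0,\phi)$, $\theta\in[-\tau_h,0]$. For $\mu\neq0$ define the $Nd\times Nd$ matrix-valued function $A(s,\mu)$ by: for $\bm q=(q_1^{\mathrm T},\ldots,q_N^{\mathrm T})^{\mathrm T}$, the $n$-th block of $A(s,\mu)\bm q$ is $\Delta\sum_{j=0}^h A_j((s+n-1)\Delta)\mu^{a_{n-n_j}}q_{b_{n-n_j}}$, where $a_k=\lfloor (k-1)/N\rfloor$, $b_k=((k-1)\bmod N)+1$. Let $B(\mu)=\begin{pmatrix}0&I_{N-1}\\ \mu&0\end{pmatrix}\otimes I_d$. The characteristic matrix $\mathcal N(\mu)\in\mathbb{C}^{Nd\times Nd}$ is defined by $\mathcal N(\mu)\bm v=\bm q(1)-B(\mu)\bm v$, where $\bm q$ solves $\dot{\bm q}(s)=A(s,\mu)\bm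 q(s)$, $s\in[0,1]$, $\bm q(0)=\bm v$. *)

theory Defs
  imports "HOL-Analysis.Analysis"
begin

definition smooth_fun :: "(real \<Rightarrow> 'a::real_normed_vector) \<Rightarrow> bool" where
  "smooth_fun f \<longleftrightarrow> (\<exists>D. D 0 = f \<and> (\<forall>k t. (D k has_vector_derivative D (Suc k) t) (at t)))"

definition cmat :: "real^'d^'d \<Rightarrow> complex^'d^'d" where
  "cmat M = (\<chi> i k. complex_of_real (M $ i $ k))"

definition tau :: "(nat \<Rightarrow> nat) \<Rightarrow> real \<Rightarrow> nat \<Rightarrow> real" where
  "tau ns \<Delta> j = real (ns j) * \<Delta>"

definition dde_sol :: "(nat \<Rightarrow> real \<Rightarrow> real^'d^'d) \<Rightarrow> (nat \<Rightarrow> nat) \<Rightarrow> nat \<Rightarrow> real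
    \<Rightarrow> real \<Rightarrow> (real \<Rightarrow> complex^'d) \<Rightarrow> (real \<Rightarrow> complex^'d) \<Rightarrow> bool" where
  "dde_sol A ns h \<Delta> t0 \<phi> x \<longleftrightarrow>
     continuous_on {t0 - tau ns \<Delta> h..} x \<and>
     (\<forall>t\<in>{t0 - tau ns \<Delta> h..t0}. x t = \<phi> (t - t0)) \<and>
     (\<forall>t\<ge>t0. (x has_vector_derivative
        (\<Sum>j\<le>h. cmat (A j t) *v x (t - tau ns \<Delta> j))) (at t within {t0..}))"

definition dde_x :: "(nat \<Rightarrow> real \<Rightarrow> real^'d^'d) \<Rightarrow> (nat \<Rightarrow> nat) \<Rightarrow> nat \<Rightarrow> real
    \<Rightarrow> real \<Rightarrow> (real \<Rightarrow> complex^'d) \<Rightarrow> real \<Rightarrow> complex^'d" where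
  "dde_x A ns h \<Delta> t0 \<phi> t = (THE y. \<exists>x. dde_sol A ns h \<Delta> t0 \<phi> x \<and> x t = y)"

definition a_idx :: "nat \<Rightarrow> int \<Rightarrow> int" where
  "a_idx N k = (k - 1) div int N"

definition b_idx :: "nat \<Rightarrow> int \<Rightarrow> nat" where
  "b_idx N k = nat ((k - 1) mod int N) + 1"

text \<open>Block vectors in C^{Nd} are represented as q :: nat => complex^'d, blocks q_1..q_N.
  n-th block of A(s,mu) q.\<close>
definition Amul :: "(nat \<Rightarrow> real \<Rightarrow> real^'d^'d) \<Rightarrow> (nat \<Rightarrow> nat) \<Rightarrow> nat \<Rightarrow> real \<Rightarrow> nat
    \<Rightarrow> complex \<Rightarrow> real \<Rightarrow> (nat \<Rightarrow> complex^'d) \<Rightarrow> nat \<Rightarrow> complex^'d" where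
  "Amul A ns h \<Delta> N \<mu> s q n =
     complex_of_real \<Delta> *s (\<Sum>j\<le>h. cmat (A j ((s + real n - 1) * \<Delta>)) *v
        ((\<mu> powi a_idx N (int n - int (ns j))) *s q (b_idx N (int n - int (ns j)))))"

definition ode_sol :: "(nat \<Rightarrow> real \<Rightarrow> real^'d^'d) \<Rightarrow> (nat \<Rightarrow> nat) \<Rightarrow> nat \<Rightarrow> real \<Rightarrow> nat
    \<Rightarrow> complex \<Rightarrow> (nat \<Rightarrow> complex^'d) \<Rightarrow> (nat \<Rightarrow> real \<Rightarrow> complex^'d) \<Rightarrow> bool" where
  "ode_sol A ns h \<Delta> N \<mu> v q \<longleftrightarrow>
     (\<forall>n\<in>{1..N}. q n 0 = v n \<and>
        (\<forall>s\<in>{0..1}. (q n has_vector_derivative Amul A ns h \<Delta> N \<mu> s (\<lambda>m. q m s) n)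
                        (at s within {0..1})))"

definition ode_q :: "(nat \<Rightarrow> real \<Rightarrow> real^'d^'d) \<Rightarrow> (nat \<Rightarrow> nat) \<Rightarrow> nat \<Rightarrow> real \<Rightarrow> nat
    \<Rightarrow> complex \<Rightarrow> (nat \<Rightarrow> complex^'d) \<Rightarrow> nat \<Rightarrow> real \<Rightarrow> complex^'d" where
  "ode_q A ns h \<Delta> N \<mu> v n s = (THE y. \<exists>q. ode_sol A ns h \<Delta> N \<mu> v q \<and> q n s = y)"

text \<open>n-th block of B(mu) v, B(mu) = [[0, I_{N-1}],[mu, 0]] (x) I_d.\<close>
definition Bmul :: "nat \<Rightarrow> complex \<Rightarrow> (nat \<Rightarrow> complex^'d) \<Rightarrow> nat \<Rightarrow> complex^'d" where
  "Bmul N \<mu> v n = (if n < N then v (Suc n) else \<mu> *s v 1)"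

definition charN :: "(nat \<Rightarrow> real \<Rightarrow> real^'d^'d) \<Rightarrow> (nat \<Rightarrow> nat) \<Rightarrow> nat \<Rightarrow> real \<Rightarrow> nat
    \<Rightarrow> complex \<Rightarrow> (nat \<Rightarrow> complex^'d) \<Rightarrow> nat \<Rightarrow> complex^'d" where
  "charN A ns h \<Delta> N \<mu> v n = ode_q A ns h \<Delta> N \<mu> v n 1 - Bmul N \<mu> v n"

text \<open>The eigenfunction built from v:
  phi(t) = mu^{a_n} q_{b_n}(t/Delta - (n-1)) for t in ((n-1)Delta, n Delta], n = -n_h+1..0;
  at the left endpoint t = -tau_h the formula for n = -n_h+1 (continuous extension) is used.\<close>
definition phi_hat :: "(nat \<Rightarrow> real \<Rightarrow> real^'d^'d) \<Rightarrow> (nat \<Rightarrow> nat) \<Rightarrow> nat \<Rightarrow> real \<Rightarrow> nat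
    \<Rightarrow> complex \<Rightarrow> (nat \<Rightarrow> complex^'d) \<Rightarrow> real \<Rightarrow> complex^'d" where
  "phi_hat A ns h \<Delta> N \<mu> v t =
     (let n = (if t = - tau ns \<Delta> h then 1 - int (ns h) else \<lceil>t / \<Delta>\<rceil>)
      in (\<mu> powi a_idx N n) *s ode_q A ns h \<Delta> N \<mu> v (b_idx N n) (t / \<Delta> - real_of_int (n - 1)))"

end

theory Submission
  imports Defs
begin

text \<open>
  If \<open>\<U> \<phi> = \<mu> \<phi>\<close>, the solution \<open>x\<close> through \<open>\<phi>\<close> satisfies \<open>x(t + T) = \<mu> x(t)\<close> for all
  \<open>t \<ge> -\<tau>\<^sub>h\<close>, since both sides solve the equation with initial function \<open>\<mu> \<phi>\<close>. Shifting a
  delayed argument back into the first period therefore costs exactly the factor \<open>\<mu>\<^sup>a\<close> of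
  \<open>A(s, \<mu>)\<close>, so the blocks \<open>q\<^sub>n(s) = x((s + n - 1) \<Delta>)\<close> solve \<open>q' = A(s, \<mu>) q\<close> with
  \<open>q(0) = v\<close> and \<open>q(1) = B(\<mu>) v\<close>, i.e. \<open>\<N>(\<mu>) v = 0\<close>.

  Conversely, if \<open>\<N>(\<mu>) v = 0\<close>, the blocks \<open>\<mu>\<^sup>a\<^sub>k q\<^sub>b\<^sub>k\<close> placed on \<open>[(k - 1) \<Delta>, k \<Delta>]\<close> for all
  integers \<open>k\<close> fit together continuously because \<open>q(1) = B(\<mu>) v\<close>; by the same computation
  read backwards the resulting function solves the delay equation on the whole line, and it
  is multiplied by \<open>\<mu>\<close> under a shift by \<open>T\<close>. Its restriction to \<open>[-\<tau>\<^sub>h, 0]\<close> is \<open>\<phi>\<close>-hat.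

  Existence and uniqueness of solutions, of the delay equation and of the block ODE, come
  from Picard iteration for systems whose right-hand side depends Lipschitz-continuously on
  the past.
\<close>

lemma norm_vector_scalar_mult:
  fixes x :: "'a::real_normed_div_algebra^'n"
  shows "norm (c *s x) = norm c * norm x"
  by (simp add: norm_vec_def vector_scalar_mult_def norm_mult L2_set_right_distrib)

lemma bounded_linear_vector_scalar_mult:
  "bounded_linear (\<lambda>x :: 'a::real_normed_div_algebra^'n. c *s x)"
proof (rule bounded_linear_intro[of _ "norm c"])
  show "c *s (x + y) = c *s x + c *s y" for x y :: "'a^'n"
    by (simp add: vec_eq_iff algebra_simps)
  show "c *s (r *\<^sub>R x) = r *\<^sub>R (c *s x)" for r and x :: "'a^'n"
    by (simp add: vec_eq_iff)
  show "norm (c *s x) \<le> norm x * norm c" for x :: "'a^'n"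
    by (simp add: norm_vector_scalar_mult)
qed

lemma continuous_on_vector_scalar_mult [continuous_intros]:
  "continuous_on S f \<Longrightarrow> continuous_on S (\<lambda>t. c *s (f t :: 'a::real_normed_div_algebra^'n))"
  using bounded_linear_vector_scalar_mult[of c] by (rule bounded_linear.continuous_on)

lemma scaleR_eq_of_real_vector_scalar_mult:
  "r *\<^sub>R (x :: 'a::real_algebra_1^'n) = (of_real r :: 'a) *s x"
proof -
  have "(r *\<^sub>R x) $ i = ((of_real r :: 'a) *s x) $ i" for i
    by (subst vector_scaleR_component) (simp add: scaleR_conv_of_real)
  then show ?thesis by (simp add: vec_eq_iff)
qed

definition abs_entry_sum :: "real^'n^'m \<Rightarrow> real" where
  "abs_entry_sum M = (\<Sum>i\<in>UNIV. \<Sum>k\<in>UNIV. \<bar>M $ i $ k\<bar>)"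

lemma abs_entry_sum_nonneg: "abs_entry_sum M \<ge> 0"
  unfolding abs_entry_sum_def by (intro sum_nonneg) auto

lemma norm_cmat_mult_le: "norm (cmat M *v x) \<le> abs_entry_sum M * norm x"
proof -
  have "norm (cmat M *v x) \<le> (\<Sum>i\<in>UNIV. norm ((cmat M *v x) $ i))"
    by (simp add: norm_vec_def L2_set_le_sum)
  also have "\<dots> \<le> (\<Sum>i\<in>UNIV. \<Sum>k\<in>UNIV. \<bar>M $ i $ k\<bar> * norm x)"
  proof (rule sum_mono)
    fix i
    have "norm ((cmat M *v x) $ i) = norm (\<Sum>k\<in>UNIV. complex_of_real (M $ i $ k) * x $ k)"
      by (simp add: matrix_vector_mult_def cmat_def)
    also have "\<dots> \<le> (\<Sum>k\<in>UNIV. \<bar>M $ i $ k\<bar> * norm x)"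
      by (intro sum_norm_le) (auto simp: norm_mult intro!: mult_left_mono Finite_Cartesian_Product.norm_nth_le)
    finally show "norm ((cmat M *v x) $ i) \<le> (\<Sum>k\<in>UNIV. \<bar>M $ i $ k\<bar> * norm x)" .
  qed
  also have "\<dots> = abs_entry_sum M * norm x"
    by (simp add: abs_entry_sum_def sum_distrib_right)
  finally show ?thesis .
qed

lemma continuous_on_cmat_mult [continuous_intros]:
  assumes "continuous_on S A" "continuous_on S y"
  shows "continuous_on S (\<lambda>t. cmat (A t) *v (y t :: complex^'d))"
  unfolding matrix_vector_mult_def cmat_def
  by (simp, intro continuous_on_vec_lambda continuous_intros assms)

lemma smooth_fun_continuous_on: "smooth_fun f \<Longrightarrow> continuous_on S f"
  unfolding smooth_fun_def
  by (metis continuous_at_imp_continuous_on has_vector_derivative_continuous)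

lemma has_vector_derivative_within_Un:
  assumes "(f has_vector_derivative f') (at x within S)"
    and "(f has_vector_derivative f') (at x within T)"
  shows "(f has_vector_derivative f') (at x within (S \<union> T))"
  using assms unfolding has_vector_derivative_def has_derivative_within
  by (auto intro: Lim_Un)

lemma has_vector_derivative_within_eq_upto:
  fixes t c :: real
  assumes "(g has_vector_derivative D) (at t within (S \<inter> {..c}))"
    and "\<And>u. u \<in> S \<Longrightarrow> u \<le> c \<Longrightarrow> f u = g u" "t \<in> S" "t < c"
  shows "(f has_vector_derivative D) (at t within S)"
proof -
  have "at t within S = at t within (S \<inter> {..c})"
    by (rule at_within_nhd[of _ "{..<c}"]) (use assms in \<open>auto simp: open_lessThan\<close>)
  moreover have "(f has_vector_derivative D) (at t within (S \<inter> {..c}))"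
    by (rule has_vector_derivative_transform[OF _ _ assms(1)]) (use assms in auto)
  ultimately show ?thesis by simp
qed

lemma continuous_within_eq_upto:
  fixes t c :: real
  assumes "continuous_on (S \<inter> {..c}) g"
    and "\<And>u. u \<in> S \<Longrightarrow> u \<le> c \<Longrightarrow> f u = g u" "t \<in> S" "t < c"
  shows "continuous (at t within S) f"
proof -
  have "at t within S = at t within (S \<inter> {..c})"
    by (rule at_within_nhd[of _ "{..<c}"]) (use assms in \<open>auto simp: open_lessThan\<close>)
  moreover have "continuous_on (S \<inter> {..c}) f"
    using assms(1) by (rule continuous_on_eq) (use assms in auto)
  then have "continuous (at t within (S \<inter> {..c})) f"
    using assms by (simp add: continuous_on_eq_continuous_within)
  ultimately show ?thesis by (simp add: continuous_within)
qed

lemma has_vector_derivative_continuous_on: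
  "(\<And>x. x \<in> S \<Longrightarrow> (f has_vector_derivative f' x) (at x within S)) \<Longrightarrow> continuous_on S f"
  unfolding has_vector_derivative_def by (rule has_derivative_continuous_on)

lemma finite_family_norm_bound:
  fixes z :: "'i \<Rightarrow> 'b::topological_space \<Rightarrow> 'a::real_normed_vector"
  assumes "finite I" "compact S" "\<And>i. i \<in> I \<Longrightarrow> continuous_on S (z i)"
  obtains M where "M \<ge> 0" "\<And>i t. i \<in> I \<Longrightarrow> t \<in> S \<Longrightarrow> norm (z i t) \<le> M"
proof -
  have "bounded (\<Union>i\<in>I. z i ` S)"
    using assms by (intro bounded_UN) (auto intro!: compact_imp_bounded compact_continuous_image)
  then obtain M where "\<And>y. y \<in> (\<Union>i\<in>I. z i ` S) \<Longrightarrow> norm y \<le> M"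
    unfolding bounded_iff by blast
  then show ?thesis
    by (intro that[of "max M 0"]) force+
qed

section \<open>Picard iteration for causal Lipschitz systems\<close>

lemma has_integral_power_div_fact:
  fixes a t c :: real
  assumes "a \<le> t"
  shows "((\<lambda>s. c * (s - a)^k / fact k) has_integral c * (t - a)^Suc k / fact (Suc k)) {a..t}"
proof -
  have "((\<lambda>s. c * (s - a)^k / fact k) has_integral
        c * (t - a)^Suc k / fact (Suc k) - c * (a - a)^Suc k / fact (Suc k)) {a..t}"
  proof (rule fundamental_theorem_of_calculus[OF assms])
    fix x assume "x \<in> {a..t}"
    have "((\<lambda>s. c * (s - a)^Suc k / fact (Suc k)) has_real_derivative
            c * (real (Suc k) * (x - a)^k) / fact (Suc k)) (at x within {a..t})"
      by (rule derivative_eq_intros refl | simp)+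
    moreover have "c * (real (Suc k) * (x - a)^k) / fact (Suc k) = c * (x - a)^k / fact k"
      by (simp add: fact_Suc field_simps del: of_nat_Suc)
    ultimately show "((\<lambda>s. c * (s - a)^Suc k / fact (Suc k)) has_vector_derivative
            c * (x - a)^k / fact k) (at x within {a..t})"
      by (simp add: has_real_derivative_iff_has_vector_derivative)
  qed
  then show ?thesis by simp
qed

lemma norm_integral_le_power_div_fact:
  fixes F :: "real \<Rightarrow> 'a::banach"
  assumes "a \<le> t" "F integrable_on {a..t}"
    and "\<And>s. s \<in> {a..t} \<Longrightarrow> norm (F s) \<le> L * (M * (L * (s - a))^k / fact k)"
  shows "norm (integral {a..t} F) \<le> M * (L * (t - a))^Suc k / fact (Suc k)"
proof -
  have poly: "((\<lambda>s. M * L^Suc k * (s - a)^k / fact k) has_integral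
                 M * L^Suc k * (t - a)^Suc k / fact (Suc k)) {a..t}"
    by (rule has_integral_power_div_fact[OF assms(1)])
  have eq: "L * (M * (L * (s - a))^k / fact k) = M * L^Suc k * (s - a)^k / fact k" for s
    by (simp add: power_mult_distrib)
  have "norm (integral {a..t} F) \<le> integral {a..t} (\<lambda>s. M * L^Suc k * (s - a)^k / fact k)"
  proof (rule integral_norm_bound_integral[OF assms(2)])
    show "(\<lambda>s. M * L^Suc k * (s - a)^k / fact k) integrable_on {a..t}"
      using poly by blast
    fix s assume "s \<in> {a..t}"
    then show "norm (F s) \<le> M * L^Suc k * (s - a)^k / fact k"
      using assms(3) eq by metis
  qed
  also have "\<dots> = M * L^Suc k * (t - a)^Suc k / fact (Suc k)"
    using poly by (rule integral_unique)
  finally show ?thesis by (simp add: power_mult_distrib mult_ac)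
qed

lemma power_div_fact_mono:
  fixes M L :: real
  assumes "M \<ge> 0" "L \<ge> 0" "a \<le> u" "u \<le> s"
  shows "M * (L * (u - a))^k / fact k \<le> M * (L * (s - a))^k / fact k"
  using assms by (intro divide_right_mono mult_left_mono power_mono mult_left_mono) auto

definition causal_lipschitz ::
    "'i set \<Rightarrow> real \<Rightarrow> real \<Rightarrow> real \<Rightarrow> (('i \<Rightarrow> real \<Rightarrow> 'a::real_normed_vector) \<Rightarrow> 'i \<Rightarrow> real \<Rightarrow> 'a) \<Rightarrow> bool"
  where "causal_lipschitz I a b L \<Phi> \<longleftrightarrow>
    (\<forall>y w i s B. i \<in> I \<longrightarrow> s \<in> {a..b} \<longrightarrow> (\<forall>j\<in>I. \<forall>u\<in>{a..s}. norm (y j u - w j u) \<le> B) \<longrightarrow>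
       norm (\<Phi> y i s - \<Phi> w i s) \<le> L * B)"

lemma causal_lipschitzD:
  assumes "causal_lipschitz I a b L \<Phi>" "i \<in> I" "s \<in> {a..b}"
    and "\<And>j u. j \<in> I \<Longrightarrow> u \<in> {a..s} \<Longrightarrow> norm (y j u - w j u) \<le> B"
  shows "norm (\<Phi> y i s - \<Phi> w i s) \<le> L * B"
  using assms unfolding causal_lipschitz_def by blast

lemma norm_integral_causal_lipschitz_le:
  fixes \<Phi> :: "('i \<Rightarrow> real \<Rightarrow> 'a::banach) \<Rightarrow> 'i \<Rightarrow> real \<Rightarrow> 'a"
  assumes lip: "causal_lipschitz I a b L \<Phi>" and L: "L \<ge> 0" and M: "M \<ge> 0"
    and j: "j \<in> I" and t: "t \<in> {a..b}"
    and int: "(\<lambda>s. \<Phi> y j s - \<Phi> w j s) integrable_on {a..t}"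
    and bound: "\<And>l u. l \<in> I \<Longrightarrow> u \<in> {a..t} \<Longrightarrow> norm (y l u - w l u) \<le> M * (L * (u - a))^k / fact k"
  shows "norm (integral {a..t} (\<lambda>s. \<Phi> y j s - \<Phi> w j s)) \<le> M * (L * (t - a))^Suc k / fact (Suc k)"
proof (rule norm_integral_le_power_div_fact[OF _ int])
  fix s assume s: "s \<in> {a..t}"
  show "norm (\<Phi> y j s - \<Phi> w j s) \<le> L * (M * (L * (s - a))^k / fact k)"
  proof (rule causal_lipschitzD[OF lip j])
    fix l u assume "l \<in> I" "u \<in> {a..s}"
    then show "norm (y l u - w l u) \<le> M * (L * (s - a))^k / fact k"
      using bound[of l u] power_div_fact_mono[OF M L, of a u s k] s by fastforce
  qed (use s t in auto)
qed (use t in auto)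

lemma causal_lipschitz_diff_bound:
  fixes \<Phi> :: "('i \<Rightarrow> real \<Rightarrow> 'a::banach) \<Rightarrow> 'i \<Rightarrow> real \<Rightarrow> 'a"
  assumes lip: "causal_lipschitz I a b L \<Phi>" and L: "L \<ge> 0" and M: "M \<ge> 0"
    and y: "\<And>i t. i \<in> I \<Longrightarrow> t \<in> {a..b} \<Longrightarrow> (y i has_vector_derivative \<Phi> y i t) (at t within {a..b})"
    and w: "\<And>i t. i \<in> I \<Longrightarrow> t \<in> {a..b} \<Longrightarrow> (w i has_vector_derivative \<Phi> w i t) (at t within {a..b})"
    and init: "\<And>i. i \<in> I \<Longrightarrow> y i a = w i a"
    and bound: "\<And>i t. i \<in> I \<Longrightarrow> t \<in> {a..b} \<Longrightarrow> norm (y i t - w i t) \<le> M"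
  shows "i \<in> I \<Longrightarrow> t \<in> {a..b} \<Longrightarrow> norm (y i t - w i t) \<le> M * (L * (t - a))^k / fact k"
proof (induction k arbitrary: i t)
  case 0
  then show ?case using bound by simp
next
  case (Suc k)
  have sub: "{a..t} \<subseteq> {a..b}"
    using Suc.prems by auto
  have "((\<lambda>s. \<Phi> y i s - \<Phi> w i s) has_integral (y i t - y i a) - (w i t - w i a)) {a..t}"
    using Suc.prems by (intro has_integral_diff fundamental_theorem_of_calculus)
      (auto intro: has_vector_derivative_within_subset[OF y sub] has_vector_derivative_within_subset[OF w sub])
  then have "y i t - w i t = integral {a..t} (\<lambda>s. \<Phi> y i s - \<Phi> w i s)"
    and "(\<lambda>s. \<Phi> y i s - \<Phi> w i s) integrable_on {a..t}"
    using init[OF Suc.prems(1)] by (auto simp: integral_unique algebra_simps)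
  with norm_integral_causal_lipschitz_le[OF lip L M Suc.prems] Suc.IH sub
  show ?case by auto
qed

lemma causal_lipschitz_unique:
  fixes \<Phi> :: "('i \<Rightarrow> real \<Rightarrow> 'a::banach) \<Rightarrow> 'i \<Rightarrow> real \<Rightarrow> 'a"
  assumes I: "finite I" and L: "L \<ge> 0" and lip: "causal_lipschitz I a b L \<Phi>"
    and y: "\<And>i t. i \<in> I \<Longrightarrow> t \<in> {a..b} \<Longrightarrow> (y i has_vector_derivative \<Phi> y i t) (at t within {a..b})"
    and w: "\<And>i t. i \<in> I \<Longrightarrow> t \<in> {a..b} \<Longrightarrow> (w i has_vector_derivative \<Phi> w i t) (at t within {a..b})"
    and init: "\<And>i. i \<in> I \<Longrightarrow> y i a = w i a"
    and i: "i \<in> I" and t: "t \<in> {a..b}"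
  shows "y i t = w i t"
proof -
  have "continuous_on {a..b} (\<lambda>t. y j t - w j t)" if "j \<in> I" for j
    using has_vector_derivative_continuous_on[OF y[OF that]] has_vector_derivative_continuous_on[OF w[OF that]]
    by (rule continuous_on_diff)
  then obtain M where M: "M \<ge> 0" "\<And>j t. j \<in> I \<Longrightarrow> t \<in> {a..b} \<Longrightarrow> norm (y j t - w j t) \<le> M"
    using finite_family_norm_bound[where z="\<lambda>j t. y j t - w j t", OF I compact_Icc] by blast
  have "(\<lambda>k. M * ((L * (t - a))^k / fact k)) \<longlonglongrightarrow> M * 0"
    using summable_exp_generic[of "L * (t - a)"]
    by (intro tendsto_mult tendsto_const) (auto dest: summable_LIMSEQ_zero simp: divide_inverse mult.commute)
  then have "norm (y i t - w i t) \<le> M * 0"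
    using causal_lipschitz_diff_bound[OF lip L M(1) y w init M(2) i t]
    by (intro tendsto_le[OF _ _ tendsto_const]) auto
  then show ?thesis by simp
qed

lemma causal_lipschitz_uniform_limit:
  assumes I: "finite I" and L: "L \<ge> 0" and lip: "causal_lipschitz I a b L \<Phi>"
    and lim: "\<And>j. j \<in> I \<Longrightarrow> uniform_limit {a..b} (\<lambda>k. Y k j) (y j) sequentially"
    and i: "i \<in> I"
  shows "uniform_limit {a..b} (\<lambda>k. \<Phi> (Y k) i) (\<Phi> y i) sequentially"
proof (rule uniform_limitI)
  fix e :: real assume e: "e > 0"
  have "\<forall>\<^sub>F k in sequentially. \<forall>j\<in>I. \<forall>u\<in>{a..b}. dist (Y k j u) (y j u) < e / (L + 1)"
    using lim e L by (intro eventually_ball_finite[OF I] ballI uniform_limitD) auto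
  then show "\<forall>\<^sub>F k in sequentially. \<forall>s\<in>{a..b}. dist (\<Phi> (Y k) i s) (\<Phi> y i s) < e"
  proof eventually_elim
    case (elim k)
    show ?case
    proof
      fix s assume s: "s \<in> {a..b}"
      have "norm (\<Phi> (Y k) i s - \<Phi> y i s) \<le> L * (e / (L + 1))"
        by (rule causal_lipschitzD[OF lip i s]) (use elim s in \<open>auto simp: dist_norm intro: less_imp_le\<close>)
      also have "\<dots> < e"
        using e L by (simp add: field_simps)
      finally show "dist (\<Phi> (Y k) i s) (\<Phi> y i s) < e"
        by (simp add: dist_norm)
    qed
  qed
qed

primrec picard_iterate ::
    "('i \<Rightarrow> 'a::banach) \<Rightarrow> real \<Rightarrow> (('i \<Rightarrow> real \<Rightarrow> 'a) \<Rightarrow> 'i \<Rightarrow> real \<Rightarrow> 'a) \<Rightarrow> nat \<Rightarrow> 'i \<Rightarrow> real \<Rightarrow> 'a"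
  where
    "picard_iterate y0 a \<Phi> 0 = (\<lambda>i t. y0 i)"
  | "picard_iterate y0 a \<Phi> (Suc k) = (\<lambda>i t. y0 i + integral {a..t} (\<Phi> (picard_iterate y0 a \<Phi> k) i))"

locale causal_lipschitz_system =
  fixes I :: "'i set" and a b L :: real and \<Phi> :: "('i \<Rightarrow> real \<Rightarrow> 'a::banach) \<Rightarrow> 'i \<Rightarrow> real \<Rightarrow> 'a"
    and y0 :: "'i \<Rightarrow> 'a"
  assumes finite_I: "finite I" and a_le_b: "a \<le> b" and L_nonneg: "L \<ge> 0"
    and lipschitz: "causal_lipschitz I a b L \<Phi>"
    and continuous: "\<And>y i. i \<in> I \<Longrightarrow> (\<And>j. j \<in> I \<Longrightarrow> continuous_on {a..b} (y j) \<and> y j a = y0 j)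
                  \<Longrightarrow> continuous_on {a..b} (\<Phi> y i)"
begin

abbreviation "P \<equiv> picard_iterate y0 a \<Phi>"

lemma picard_iterate_Suc_apply: "P (Suc k) j t = y0 j + integral {a..t} (\<Phi> (P k) j)"
  by simp

declare picard_iterate.simps(2) [simp del]

lemma picard_iterate_continuous:
  "j \<in> I \<Longrightarrow> continuous_on {a..b} (P k j) \<and> P k j a = y0 j"
proof (induction k arbitrary: j)
  case 0
  then show ?case by simp
next
  case (Suc k)
  have "continuous_on {a..b} (\<Phi> (P k) j)"
    using continuous Suc by blast
  then have "continuous_on {a..b} (\<lambda>t. integral {a..t} (\<Phi> (P k) j))"
    by (intro indefinite_integral_continuous_1 integrable_continuous_real)
  then show ?case
    unfolding picard_iterate_Suc_apply by (auto intro!: continuous_intros)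
qed

lemma integrable_picard_iterate:
  assumes "j \<in> I" "t \<in> {a..b}"
  shows "\<Phi> (P k) j integrable_on {a..t}"
proof (rule integrable_continuous_real)
  have "continuous_on {a..b} (\<Phi> (P k) j)"
    using continuous[OF assms(1)] picard_iterate_continuous by blast
  then show "continuous_on {a..t} (\<Phi> (P k) j)"
    by (rule continuous_on_subset) (use assms in auto)
qed

lemma picard_iterate_diff_bound:
  obtains M where "M \<ge> 0"
    "\<And>k j t. j \<in> I \<Longrightarrow> t \<in> {a..b} \<Longrightarrow> norm (P (Suc k) j t - P k j t) \<le> M * (L * (t - a))^k / fact k"
proof -
  have "continuous_on {a..b} (\<lambda>t. P 1 j t - P 0 j t)" if "j \<in> I" for j
    using picard_iterate_continuous[OF that] by (intro continuous_on_diff) blast+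
  then obtain M where M0: "M \<ge> 0" and M: "\<And>j t. j \<in> I \<Longrightarrow> t \<in> {a..b} \<Longrightarrow> norm (P 1 j t - P 0 j t) \<le> M"
    using finite_family_norm_bound[where z="\<lambda>j t. P 1 j t - P 0 j t", OF finite_I compact_Icc] by blast
  have "norm (P (Suc k) j t - P k j t) \<le> M * (L * (t - a))^k / fact k"
    if "j \<in> I" "t \<in> {a..b}" for k j t
    using that
  proof (induction k arbitrary: j t)
    case 0
    then show ?case using M by simp
  next
    case (Suc k)
    have "P (Suc (Suc k)) j t - P (Suc k) j t = integral {a..t} (\<lambda>s. \<Phi> (P (Suc k)) j s - \<Phi> (P k) j s)"
      using Suc.prems
      by (simp add: picard_iterate_Suc_apply integral_diff integrable_picard_iterate)
    also have "norm \<dots> \<le> M * (L * (t - a))^Suc k / fact (Suc k)"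
      using Suc by (intro norm_integral_causal_lipschitz_le[OF lipschitz L_nonneg M0]
          integrable_diff integrable_picard_iterate) auto
    finally show ?case .
  qed
  with M0 show ?thesis by (rule that)
qed

lemma picard_iterate_uniform_limit:
  obtains y where "\<And>i. i \<in> I \<Longrightarrow> uniform_limit {a..b} (\<lambda>k. P k i) (y i) sequentially"
proof -
  obtain M where M0: "M \<ge> 0"
    and M: "\<And>k j t. j \<in> I \<Longrightarrow> t \<in> {a..b} \<Longrightarrow> norm (P (Suc k) j t - P k j t) \<le> M * (L * (t - a))^k / fact k"
    using picard_iterate_diff_bound by blast
  have telescope: "P k i t = y0 i + (\<Sum>l<k. P (Suc l) i t - P l i t)" for k i t
    by (simp add: sum_lessThan_telescope[of "\<lambda>l. P l i t"])
  show ?thesis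
  proof
    fix i assume i: "i \<in> I"
    have "uniform_limit {a..b} (\<lambda>k t. \<Sum>l<k. P (Suc l) i t - P l i t)
            (\<lambda>t. \<Sum>l. P (Suc l) i t - P l i t) sequentially"
    proof (rule Weierstrass_m_test)
      show "summable (\<lambda>l. M * ((L * (b - a))^l / fact l))"
        using summable_exp_generic[of "L * (b - a)"]
        by (intro summable_mult) (simp add: divide_inverse mult.commute)
      fix l t assume t: "t \<in> {a..b}"
      have "norm (P (Suc l) i t - P l i t) \<le> M * (L * (t - a))^l / fact l"
        using M i t by blast
      also have "\<dots> \<le> M * (L * (b - a))^l / fact l"
        using t by (intro power_div_fact_mono M0 L_nonneg) auto
      finally show "norm (P (Suc l) i t - P l i t) \<le> M * ((L * (b - a))^l / fact l)"
        by simp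
    qed
    then have "uniform_limit {a..b} (\<lambda>k t. y0 i + (\<Sum>l<k. P (Suc l) i t - P l i t))
            (\<lambda>t. y0 i + (\<Sum>l. P (Suc l) i t - P l i t)) sequentially"
      by (intro uniform_limit_add uniform_limit_const)
    moreover have "(\<lambda>k. P k i) = (\<lambda>k t. y0 i + (\<Sum>l<k. P (Suc l) i t - P l i t))"
      by (intro ext telescope)
    ultimately show "uniform_limit {a..b} (\<lambda>k. P k i) (\<lambda>t. y0 i + (\<Sum>l. P (Suc l) i t - P l i t)) sequentially"
      by simp
  qed
qed

context
  fixes y
  assumes lim: "\<And>i. i \<in> I \<Longrightarrow> uniform_limit {a..b} (\<lambda>k. P k i) (y i) sequentially"
begin

lemma picard_limit_continuous:
  assumes i: "i \<in> I"
  shows "continuous_on {a..b} (y i) \<and> y i a = y0 i"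
proof
  show "continuous_on {a..b} (y i)"
    using picard_iterate_continuous[OF i]
    by (intro uniform_limit_theorem[OF _ lim[OF i]] always_eventually) auto
  have "(\<lambda>k. P k i a) \<longlonglongrightarrow> y i a"
    using a_le_b by (intro tendsto_uniform_limitI[OF lim[OF i]]) auto
  moreover have "(\<lambda>k. P k i a) \<longlonglongrightarrow> y0 i"
    using picard_iterate_continuous[OF i] by simp
  ultimately show "y i a = y0 i"
    by (rule LIMSEQ_unique)
qed

lemma picard_limit_fixpoint:
  assumes i: "i \<in> I" and t: "t \<in> {a..b}"
  shows "y i t = y0 i + integral {a..t} (\<Phi> y i)"
proof -
  have sub: "{a..t} \<subseteq> {a..b}"
    using t by auto
  have "uniform_limit {a..t} (\<lambda>k. \<Phi> (P k) i) (\<Phi> y i) sequentially"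
    using causal_lipschitz_uniform_limit[OF finite_I L_nonneg lipschitz lim i] sub
    by (rule uniform_limit_on_subset)
  then obtain Is J where Is: "\<And>k. (\<Phi> (P k) i has_integral Is k) {a..t}"
    and J: "(\<Phi> y i has_integral J) {a..t}" and lim_Is: "Is \<longlonglongrightarrow> J"
  proof (rule uniform_limit_integral)
    show "continuous_on {a..t} (\<Phi> (P k) i)" for k
      using continuous[OF i] picard_iterate_continuous continuous_on_subset[OF _ sub] by blast
  qed auto
  have "(\<lambda>k. integral {a..t} (\<Phi> (P k) i)) = Is" "integral {a..t} (\<Phi> y i) = J"
    using Is J by (auto simp: integral_unique)
  then have "(\<lambda>k. P (Suc k) i t) \<longlonglongrightarrow> y0 i + integral {a..t} (\<Phi> y i)"
    using lim_Is by (simp add: picard_iterate_Suc_apply tendsto_add)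
  moreover have "(\<lambda>k. P (Suc k) i t) \<longlonglongrightarrow> y i t"
    using LIMSEQ_Suc[OF tendsto_uniform_limitI[OF lim[OF i] t]] .
  ultimately show ?thesis
    by (rule LIMSEQ_unique[rotated])
qed

end

theorem exists_solution:
  obtains y where "\<And>i. i \<in> I \<Longrightarrow> y i a = y0 i"
    "\<And>i t. i \<in> I \<Longrightarrow> t \<in> {a..b} \<Longrightarrow> (y i has_vector_derivative \<Phi> y i t) (at t within {a..b})"
proof -
  obtain y where lim: "\<And>i. i \<in> I \<Longrightarrow> uniform_limit {a..b} (\<lambda>k. P k i) (y i) sequentially"
    using picard_iterate_uniform_limit by blast
  show ?thesis
  proof (rule that)
    fix i assume i: "i \<in> I"
    then show "y i a = y0 i"
      using picard_limit_continuous[OF lim] by blast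
    fix t assume t: "t \<in> {a..b}"
    have "continuous_on {a..b} (\<Phi> y i)"
      using continuous[OF i] picard_limit_continuous[OF lim] by blast
    then have "((\<lambda>u. y0 i + integral {a..u} (\<Phi> y i)) has_vector_derivative \<Phi> y i t) (at t within {a..b})"
      using integral_has_vector_derivative[OF _ t] by (intro derivative_eq_intros) auto
    then show "(y i has_vector_derivative \<Phi> y i t) (at t within {a..b})"
      by (rule has_vector_derivative_transform[OF t, rotated]) (simp add: picard_limit_fixpoint[OF lim i])
  qed
qed

end

section \<open>The delay equation\<close>

definition with_initial :: "(real \<Rightarrow> 'a) \<Rightarrow> (real \<Rightarrow> 'a) \<Rightarrow> real \<Rightarrow> 'a" where
  "with_initial \<phi> g u = (if u \<le> 0 then \<phi> u else g u)"

lemma with_initial_eq_right: "u \<ge> 0 \<Longrightarrow> g 0 = \<phi> 0 \<Longrightarrow> with_initial \<phi> g u = g u"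
  by (cases "u = 0") (auto simp: with_initial_def)

lemma continuous_on_with_initial:
  assumes "continuous_on {c..0} \<phi>" "continuous_on {0..b} g" "g 0 = \<phi> 0" "c \<le> 0" "0 \<le> b"
  shows "continuous_on {c..b} (with_initial \<phi> g)"
  unfolding with_initial_def
proof (rule continuous_on_cases_le[where h="\<lambda>u. u" and a=0])
  have "{u \<in> {c..b}. u \<le> 0} = {c..0}" "{u \<in> {c..b}. 0 \<le> u} = {0..b}"
    using assms(4,5) by auto
  then show "continuous_on {u \<in> {c..b}. u \<le> 0} \<phi>" "continuous_on {u \<in> {c..b}. 0 \<le> u} g"
    using assms(1,2) by simp_all
qed (use assms(3) in \<open>auto intro: continuous_on_id\<close>)

locale dde_system =
  fixes A :: "nat \<Rightarrow> real \<Rightarrow> real^'d^'d" and ns :: "nat \<Rightarrow> nat" and h :: nat and \<Delta> :: real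
  assumes Delta_pos: "\<Delta> > 0" and ns_0: "ns 0 = 0"
    and ns_strict_mono: "\<And>j. 1 \<le> j \<Longrightarrow> j < h \<Longrightarrow> ns j < ns (Suc j)"
    and A_continuous: "\<And>j. j \<le> h \<Longrightarrow> continuous_on UNIV (A j)"
begin

definition rhs :: "(real \<Rightarrow> complex^'d) \<Rightarrow> real \<Rightarrow> complex^'d" where
  "rhs x t = (\<Sum>j\<le>h. cmat (A j t) *v x (t - tau ns \<Delta> j))"

lemma ns_le_ns_h:
  assumes "j \<le> h"
  shows "ns j \<le> ns h"
proof (cases "j = 0")
  case False
  from assms show ?thesis
  proof (induction rule: dec_induct)
    case (step k)
    then show ?case
      using ns_strict_mono[of k] False by simp
  qed simp
qed (simp add: ns_0)

lemma tau_nonneg: "tau ns \<Delta> j \<ge> 0"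
  using Delta_pos by (simp add: tau_def)

lemma tau_le_tau_h: "j \<le> h \<Longrightarrow> tau ns \<Delta> j \<le> tau ns \<Delta> h"
  using ns_le_ns_h Delta_pos by (simp add: tau_def)

lemma coefficient_bound:
  obtains K where "K \<ge> 0" "\<And>t. t \<in> {c..d} \<Longrightarrow> (\<Sum>j\<le>h. abs_entry_sum (A j t)) \<le> K"
proof -
  have "continuous_on {c..d} (\<lambda>t. \<Sum>j\<le>h. abs_entry_sum (A j t))"
    unfolding abs_entry_sum_def
    by (intro continuous_intros continuous_on_subset[OF A_continuous]) auto
  then obtain K where "K \<ge> 0" "\<And>j t. j \<in> {()} \<Longrightarrow> t \<in> {c..d} \<Longrightarrow> norm (\<Sum>j\<le>h. abs_entry_sum (A j t)) \<le> K"
    using finite_family_norm_bound[where z="\<lambda>_ t. \<Sum>j\<le>h. abs_entry_sum (A j t)" and I="{()}"] by blast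
  then show ?thesis
    by (intro that[of K]) force+
qed

lemma norm_rhs_diff_le:
  assumes "\<And>j. j \<le> h \<Longrightarrow> norm (x (t - tau ns \<Delta> j) - y (t - tau ns \<Delta> j)) \<le> B"
  shows "norm (rhs x t - rhs y t) \<le> (\<Sum>j\<le>h. abs_entry_sum (A j t)) * B"
proof -
  have "rhs x t - rhs y t = (\<Sum>j\<le>h. cmat (A j t) *v (x (t - tau ns \<Delta> j) - y (t - tau ns \<Delta> j)))"
    by (simp add: rhs_def sum_subtractf matrix_vector_mult_diff_distrib)
  also have "norm \<dots> \<le> (\<Sum>j\<le>h. abs_entry_sum (A j t) * B)"
  proof (rule sum_norm_le)
    fix j assume "j \<in> {..h}"
    then have "abs_entry_sum (A j t) * norm (x (t - tau ns \<Delta> j) - y (t - tau ns \<Delta> j)) \<le> abs_entry_sum (A j t) * B"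
      using assms abs_entry_sum_nonneg by (intro mult_left_mono) auto
    with norm_cmat_mult_le
    show "norm (cmat (A j t) *v (x (t - tau ns \<Delta> j) - y (t - tau ns \<Delta> j))) \<le> abs_entry_sum (A j t) * B"
      by (rule order_trans)
  qed
  finally show ?thesis
    by (simp add: sum_distrib_right)
qed

lemma rhs_with_initial:
  assumes "\<And>u. u \<in> {- tau ns \<Delta> h..0} \<Longrightarrow> x u = \<phi> u" "s \<ge> 0"
  shows "rhs (with_initial \<phi> x) s = rhs x s"
  unfolding rhs_def
proof (intro sum.cong refl arg_cong2[where f="(*v)"])
  fix j assume "j \<in> {..h}"
  then show "with_initial \<phi> x (s - tau ns \<Delta> j) = x (s - tau ns \<Delta> j)"
    using assms tau_le_tau_h[of j] by (auto simp: with_initial_def)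
qed

lemma causal_lipschitz_rhs_with_initial:
  assumes "\<And>s. s \<in> {0..b} \<Longrightarrow> (\<Sum>j\<le>h. abs_entry_sum (A j s)) \<le> K" "K \<ge> 0"
  shows "causal_lipschitz UNIV 0 b K (\<lambda>y (_::unit) s. rhs (with_initial \<phi> (y ())) s)"
  unfolding causal_lipschitz_def
proof (intro allI impI)
  fix y w :: "unit \<Rightarrow> real \<Rightarrow> complex^'d" and s B
  assume s: "s \<in> {0..b}" and HB: "\<forall>j\<in>UNIV. \<forall>u\<in>{0..s}. norm (y j u - w j u) \<le> B"
  then have "norm (y () 0 - w () 0) \<le> B"
    by simp
  then have B: "B \<ge> 0"
    using norm_ge_zero order_trans by blast
  have "norm (rhs (with_initial \<phi> (y ())) s - rhs (with_initial \<phi> (w ())) s) \<le> (\<Sum>j\<le>h. abs_entry_sum (A j s)) * B"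
  proof (rule norm_rhs_diff_le)
    fix j
    show "norm (with_initial \<phi> (y ()) (s - tau ns \<Delta> j) - with_initial \<phi> (w ()) (s - tau ns \<Delta> j)) \<le> B"
    proof (cases "s - tau ns \<Delta> j \<le> 0")
      case True
      then show ?thesis using B by (simp add: with_initial_def)
    next
      case False
      then have "s - tau ns \<Delta> j \<in> {0..s}"
        using tau_nonneg[of j] by simp
      then show ?thesis using False HB by (simp add: with_initial_def)
    qed
  qed
  also have "\<dots> \<le> K * B"
    using assms(1)[OF s] B by (rule mult_right_mono)
  finally show "norm (rhs (with_initial \<phi> (y ())) s - rhs (with_initial \<phi> (w ())) s) \<le> K * B" .
qed

lemma dde_unique_on:
  assumes i1: "\<And>t. t \<in> {- tau ns \<Delta> h..0} \<Longrightarrow> x1 t = \<phi> t"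
    and i2: "\<And>t. t \<in> {- tau ns \<Delta> h..0} \<Longrightarrow> x2 t = \<phi> t"
    and d1: "\<And>t. t \<in> {0..b} \<Longrightarrow> (x1 has_vector_derivative rhs x1 t) (at t within {0..b})"
    and d2: "\<And>t. t \<in> {0..b} \<Longrightarrow> (x2 has_vector_derivative rhs x2 t) (at t within {0..b})"
    and t: "t \<in> {- tau ns \<Delta> h..b}"
  shows "x1 t = x2 t"
proof (cases "t \<le> 0")
  case True
  then show ?thesis using i1 i2 t by simp
next
  case False
  obtain K where "K \<ge> 0" and K: "\<And>s. s \<in> {0..b} \<Longrightarrow> (\<Sum>j\<le>h. abs_entry_sum (A j s)) \<le> K"
    using coefficient_bound by blast
  then have lip: "causal_lipschitz UNIV 0 b K (\<lambda>y (_::unit) s. rhs (with_initial \<phi> (y ())) s)"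
    by (intro causal_lipschitz_rhs_with_initial)
  have "(\<lambda>_::unit. x1) () t = (\<lambda>_::unit. x2) () t"
  proof (rule causal_lipschitz_unique[OF _ \<open>K \<ge> 0\<close> lip])
    show "((\<lambda>_. x1) () has_vector_derivative rhs (with_initial \<phi> ((\<lambda>_. x1) ())) s) (at s within {0..b})"
      if "s \<in> {0..b}" for s
      using d1[OF that] rhs_with_initial[of x1 \<phi> s, OF i1] that by simp
    show "((\<lambda>_. x2) () has_vector_derivative rhs (with_initial \<phi> ((\<lambda>_. x2) ())) s) (at s within {0..b})"
      if "s \<in> {0..b}" for s
      using d2[OF that] rhs_with_initial[of x2 \<phi> s, OF i2] that by simp
    show "(\<lambda>_. x1) i 0 = (\<lambda>_. x2) i 0" for i :: unit
      using i1[of 0] i2[of 0] tau_nonneg[of h] by simp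
  qed (use False t in auto)
  then show ?thesis by simp
qed

lemma continuous_on_rhs:
  assumes x: "continuous_on {- tau ns \<Delta> h..b} x"
  shows "continuous_on {0..b} (rhs x)"
  unfolding rhs_def
proof (intro continuous_intros)
  fix j assume j: "j \<in> {..h}"
  show "continuous_on {0..b} (A j)"
    using A_continuous j by (auto intro: continuous_on_subset)
  show "continuous_on {0..b} (\<lambda>t. x (t - tau ns \<Delta> j))"
    by (rule continuous_on_compose2[OF x])
      (use tau_le_tau_h[of j] tau_nonneg[of j] j in \<open>auto intro!: continuous_intros\<close>)
qed

lemma dde_exists_on:
  assumes \<phi>: "continuous_on {- tau ns \<Delta> h..0} \<phi>" and b: "b \<ge> 0"
  obtains x where "continuous_on {- tau ns \<Delta> h..b} x" "\<And>t. t \<in> {- tau ns \<Delta> h..0} \<Longrightarrow> x t = \<phi> t"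
    "\<And>t. t \<in> {0..b} \<Longrightarrow> (x has_vector_derivative rhs x t) (at t within {0..b})"
proof -
  obtain K where "K \<ge> 0" and K: "\<And>s. s \<in> {0..b} \<Longrightarrow> (\<Sum>j\<le>h. abs_entry_sum (A j s)) \<le> K"
    using coefficient_bound by blast
  \<comment> \<open>On \<open>[0, b]\<close> the delay equation is a one-component causal system; delayed arguments in
    \<open>[-\<tau>\<^sub>h, 0]\<close> are read off \<open>\<phi>\<close>.\<close>
  define \<Phi> where "\<Phi> y i = rhs (with_initial \<phi> (y ()))" for y :: "unit \<Rightarrow> real \<Rightarrow> complex^'d" and i :: unit
  have ext_cont: "continuous_on {- tau ns \<Delta> h..b} (with_initial \<phi> g)"
    if "continuous_on {0..b} g" "g 0 = \<phi> 0" for g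
    using \<phi> that b tau_nonneg by (intro continuous_on_with_initial) auto
  interpret causal_lipschitz_system UNIV 0 b K \<Phi> "\<lambda>_. \<phi> 0"
  proof
    show "causal_lipschitz UNIV 0 b K \<Phi>"
      unfolding \<Phi>_def[abs_def] using K \<open>K \<ge> 0\<close> by (rule causal_lipschitz_rhs_with_initial)
    fix y :: "unit \<Rightarrow> real \<Rightarrow> complex^'d" and i
    assume "\<And>j. j \<in> UNIV \<Longrightarrow> continuous_on {0..b} (y j) \<and> y j 0 = \<phi> 0"
    then show "continuous_on {0..b} (\<Phi> y i)"
      unfolding \<Phi>_def by (intro continuous_on_rhs ext_cont) auto
  qed (use b \<open>K \<ge> 0\<close> in auto)
  obtain y where y0: "\<And>i. i \<in> UNIV \<Longrightarrow> y i 0 = \<phi> 0"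
    and y: "\<And>i t. i \<in> UNIV \<Longrightarrow> t \<in> {0..b} \<Longrightarrow> (y i has_vector_derivative \<Phi> y i t) (at t within {0..b})"
    by (rule exists_solution) (rule that)
  note y0 = y0[OF UNIV_I] and y = y[OF UNIV_I]
  show ?thesis
  proof (rule that[of "with_initial \<phi> (y ())"])
    show "continuous_on {- tau ns \<Delta> h..b} (with_initial \<phi> (y ()))"
      using has_vector_derivative_continuous_on[where f'="\<Phi> y ()", OF y] y0 by (rule ext_cont)
    show "with_initial \<phi> (y ()) t = \<phi> t" if "t \<in> {- tau ns \<Delta> h..0}" for t
      using that by (simp add: with_initial_def)
    show "(with_initial \<phi> (y ()) has_vector_derivative rhs (with_initial \<phi> (y ())) t) (at t within {0..b})"
      if t: "t \<in> {0..b}" for t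
    proof -
      have "(y () has_vector_derivative rhs (with_initial \<phi> (y ())) t) (at t within {0..b})"
        using y[OF t] unfolding \<Phi>_def .
      then show ?thesis
        by (rule has_vector_derivative_transform[OF t, rotated]) (use y0 in \<open>auto intro: with_initial_eq_right\<close>)
    qed
  qed
qed

lemma dde_solD:
  assumes "dde_sol A ns h \<Delta> 0 \<phi> x"
  shows "continuous_on {- tau ns \<Delta> h..} x" "\<And>t. t \<in> {- tau ns \<Delta> h..0} \<Longrightarrow> x t = \<phi> t"
    "\<And>t. t \<ge> 0 \<Longrightarrow> (x has_vector_derivative rhs x t) (at t within {0..})"
  using assms by (auto simp: dde_sol_def rhs_def)

lemma dde_sol_unique:
  assumes x1: "dde_sol A ns h \<Delta> 0 \<phi> x1" and x2: "dde_sol A ns h \<Delta> 0 \<phi> x2" and t: "t \<ge> - tau ns \<Delta> h"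
  shows "x1 t = x2 t"
proof (rule dde_unique_on[where b="max t 0"])
  show "(x1 has_vector_derivative rhs x1 s) (at s within {0..max t 0})" if "s \<in> {0..max t 0}" for s
    using dde_solD(3)[OF x1, of s] that by (auto intro: has_vector_derivative_within_subset)
  show "(x2 has_vector_derivative rhs x2 s) (at s within {0..max t 0})" if "s \<in> {0..max t 0}" for s
    using dde_solD(3)[OF x2, of s] that by (auto intro: has_vector_derivative_within_subset)
qed (use t dde_solD(2)[OF x1] dde_solD(2)[OF x2] in auto)

lemma dde_x_eqI:
  assumes "dde_sol A ns h \<Delta> 0 \<phi> x" "t \<ge> - tau ns \<Delta> h"
  shows "dde_x A ns h \<Delta> 0 \<phi> t = x t"
  unfolding dde_x_def
proof (rule the_equality)
  show "\<exists>x'. dde_sol A ns h \<Delta> 0 \<phi> x' \<and> x' t = x t"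
    using assms(1) by blast
  fix y assume "\<exists>x'. dde_sol A ns h \<Delta> 0 \<phi> x' \<and> x' t = y"
  then show "y = x t"
    using dde_sol_unique[OF _ assms] by blast
qed

text \<open>Solutions on the intervals \<open>[0, n]\<close> agree where they overlap, so they glue to a global
  solution.\<close>
lemma dde_solutions_on_intervals:
  assumes \<phi>: "continuous_on {- tau ns \<Delta> h..0} \<phi>"
  obtains X x where "\<And>n. continuous_on {- tau ns \<Delta> h..real n} (X n)"
    "\<And>n t. t \<in> {- tau ns \<Delta> h..0} \<Longrightarrow> X n t = \<phi> t"
    "\<And>n t. t \<in> {0..real n} \<Longrightarrow> (X n has_vector_derivative rhs (X n) t) (at t within {0..real n})"
    "\<And>n t. t \<in> {- tau ns \<Delta> h..real n} \<Longrightarrow> x t = X n t"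
proof -
  have "\<forall>n::nat. \<exists>x. continuous_on {- tau ns \<Delta> h..real n} x \<and> (\<forall>t\<in>{- tau ns \<Delta> h..0}. x t = \<phi> t) \<and>
             (\<forall>t\<in>{0..real n}. (x has_vector_derivative rhs x t) (at t within {0..real n}))"
  proof
    fix n :: nat
    obtain x where "continuous_on {- tau ns \<Delta> h..real n} x" "\<And>t. t \<in> {- tau ns \<Delta> h..0} \<Longrightarrow> x t = \<phi> t"
      "\<And>t. t \<in> {0..real n} \<Longrightarrow> (x has_vector_derivative rhs x t) (at t within {0..real n})"
      using dde_exists_on[OF \<phi>, of "real n"] by auto
    then show "\<exists>x. continuous_on {- tau ns \<Delta> h..real n} x \<and> (\<forall>t\<in>{- tau ns \<Delta> h..0}. x t = \<phi> t) \<and>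
             (\<forall>t\<in>{0..real n}. (x has_vector_derivative rhs x t) (at t within {0..real n}))"
      by blast
  qed
  then obtain X where X: "\<forall>n. continuous_on {- tau ns \<Delta> h..real n} (X n) \<and> (\<forall>t\<in>{- tau ns \<Delta> h..0}. X n t = \<phi> t) \<and>
             (\<forall>t\<in>{0..real n}. (X n has_vector_derivative rhs (X n) t) (at t within {0..real n}))"
    by (rule choice[THEN exE])
  then have Xc: "\<And>n. continuous_on {- tau ns \<Delta> h..real n} (X n)"
    and Xi: "\<And>n t. t \<in> {- tau ns \<Delta> h..0} \<Longrightarrow> X n t = \<phi> t"
    and Xd: "\<And>n t. t \<in> {0..real n} \<Longrightarrow> (X n has_vector_derivative rhs (X n) t) (at t within {0..real n})"
    by blast+
  have agree: "X m t = X n t" if mn: "m \<le> n" and t: "t \<in> {- tau ns \<Delta> h..real m}" for m n t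
  proof (rule dde_unique_on[where b="real m" and \<phi>=\<phi>])
    show "X m s = \<phi> s" "X n s = \<phi> s" if "s \<in> {- tau ns \<Delta> h..0}" for s
      using Xi[OF that] by blast+
    show "(X m has_vector_derivative rhs (X m) s) (at s within {0..real m})" if "s \<in> {0..real m}" for s
      using Xd[OF that] .
    show "(X n has_vector_derivative rhs (X n) s) (at s within {0..real m})" if "s \<in> {0..real m}" for s
      using that mn by (intro has_vector_derivative_within_subset[OF Xd[of s n]]) auto
  qed (rule t)
  have "X (nat \<lceil>t\<rceil> + 1) t = X n t" if "t \<in> {- tau ns \<Delta> h..real n}" for n t
  proof -
    have t: "t \<le> real (nat \<lceil>t\<rceil> + 1)" by linarith
    have "X (nat \<lceil>t\<rceil> + 1) t = X (min (nat \<lceil>t\<rceil> + 1) n) t"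
      using that t by (intro agree[symmetric]) auto
    also have "\<dots> = X n t"
      using that t by (intro agree) auto
    finally show ?thesis .
  qed
  with Xc Xi Xd show ?thesis
    by (rule that)
qed

lemma dde_sol_exists:
  assumes \<phi>: "continuous_on {- tau ns \<Delta> h..0} \<phi>"
  obtains x where "dde_sol A ns h \<Delta> 0 \<phi> x"
proof -
  obtain X x where Xc: "\<And>n. continuous_on {- tau ns \<Delta> h..real n} (X n)"
    and Xi: "\<And>n t. t \<in> {- tau ns \<Delta> h..0} \<Longrightarrow> X n t = \<phi> t"
    and Xd: "\<And>n t. t \<in> {0..real n} \<Longrightarrow> (X n has_vector_derivative rhs (X n) t) (at t within {0..real n})"
    and xX: "\<And>n t. t \<in> {- tau ns \<Delta> h..real n} \<Longrightarrow> x t = X n t"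
    using dde_solutions_on_intervals[OF \<phi>] by blast
  have "dde_sol A ns h \<Delta> 0 \<phi> x"
    unfolding dde_sol_def
  proof (intro conjI ballI allI impI)
    show "continuous_on {0 - tau ns \<Delta> h..} x"
      unfolding continuous_on_eq_continuous_within
    proof
      fix t assume t: "t \<in> {0 - tau ns \<Delta> h..}"
      define n where "n = nat \<lceil>t\<rceil> + 1"
      have tn: "t < real n"
        unfolding n_def by linarith
      have "continuous_on ({0 - tau ns \<Delta> h..} \<inter> {..real n}) (X n)"
        using Xc[of n] by (simp add: atLeastAtMost_def)
      moreover have "x u = X n u" if "u \<in> {0 - tau ns \<Delta> h..}" "u \<le> real n" for u
        using that by (intro xX) auto
      ultimately show "continuous (at t within {0 - tau ns \<Delta> h..}) x"
        using t tn by (rule continuous_within_eq_upto)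
    qed
    fix t assume "t \<in> {0 - tau ns \<Delta> h..0}"
    then show "x t = \<phi> (t - 0)"
      using xX[of t 0] Xi by auto
  next
    fix t :: real assume t: "t \<ge> 0"
    define n where "n = nat \<lceil>t\<rceil> + 1"
    have tn: "t < real n"
      unfolding n_def by linarith
    have "rhs (X n) t = rhs x t"
      unfolding rhs_def
    proof (intro sum.cong refl arg_cong2[where f="(*v)"])
      fix j assume "j \<in> {..h}"
      then show "X n (t - tau ns \<Delta> j) = x (t - tau ns \<Delta> j)"
        using tau_le_tau_h[of j] tau_nonneg[of j] t tn by (intro xX[symmetric]) auto
    qed
    then have "(X n has_vector_derivative rhs x t) (at t within {0..} \<inter> {..real n})"
      using Xd[of t n] t tn by (simp add: atLeastAtMost_def)
    moreover have "x u = X n u" if "u \<in> {0..}" "u \<le> real n" for u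
      using that tau_nonneg[of h] by (intro xX) auto
    ultimately have "(x has_vector_derivative rhs x t) (at t within {0..})"
    proof (rule has_vector_derivative_within_eq_upto)
      show "t \<in> {0..}" using t by simp
    qed (use tn in simp_all)
    then show "(x has_vector_derivative (\<Sum>j\<le>h. cmat (A j t) *v x (t - tau ns \<Delta> j))) (at t within {0..})"
      by (simp add: rhs_def)
  qed
  then show ?thesis by (rule that)
qed

lemma dde_sol_scale:
  assumes "dde_sol A ns h \<Delta> 0 \<phi> x"
  shows "dde_sol A ns h \<Delta> 0 (\<lambda>\<theta>. c *s \<phi> \<theta>) (\<lambda>t. c *s x t)"
  unfolding dde_sol_def
proof (intro conjI ballI allI impI)
  note x = dde_solD[OF assms]
  show "continuous_on {0 - tau ns \<Delta> h..} (\<lambda>t. c *s x t)"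
    using x(1) by (intro continuous_intros) simp
  show "c *s x t = c *s \<phi> (t - 0)" if "t \<in> {0 - tau ns \<Delta> h..0}" for t
    using x(2) that by simp
  fix t :: real assume t: "t \<ge> 0"
  have "((\<lambda>t. c *s x t) has_vector_derivative c *s rhs x t) (at t within {0..})"
    using bounded_linear_vector_scalar_mult x(3)[OF t] by (rule bounded_linear.has_vector_derivative)
  moreover have "c *s rhs x t = (\<Sum>j\<le>h. cmat (A j t) *v (c *s x (t - tau ns \<Delta> j)))"
    by (simp add: rhs_def vector_scalar_commute sum_cmul)
  ultimately show "((\<lambda>t. c *s x t) has_vector_derivative (\<Sum>j\<le>h. cmat (A j t) *v (c *s x (t - tau ns \<Delta> j))))
      (at t within {0..})"
    by simp
qed

end

section \<open>The block ODE\<close>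

lemma b_idx_in_range:
  assumes "N > 0"
  shows "b_idx N k \<in> {1..N}"
proof -
  have "0 \<le> (k - 1) mod int N" "(k - 1) mod int N < int N"
    using assms by simp_all
  then show ?thesis
    unfolding b_idx_def by auto
qed

lemma idx_of_decomp:
  assumes "N > 0" "0 \<le> r" "r < int N"
  shows "a_idx N (a * int N + r + 1) = a" "b_idx N (a * int N + r + 1) = nat r + 1"
  using assms by (simp_all add: a_idx_def b_idx_def)

lemma idx_decomp:
  assumes "N > 0"
  shows "k = a_idx N k * int N + int (b_idx N k)"
proof -
  have "k - 1 = (k - 1) div int N * int N + (k - 1) mod int N" by simp
  moreover have "(k - 1) mod int N \<ge> 0" using assms by simp
  ultimately show ?thesis unfolding a_idx_def b_idx_def by simp
qed

lemma idx_add_mult: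
  assumes "N > 0"
  shows "a_idx N (k + m * int N) = a_idx N k + m" "b_idx N (k + m * int N) = b_idx N k"
proof -
  have k: "k + m * int N = (a_idx N k + m) * int N + (int (b_idx N k) - 1) + 1"
    using idx_decomp[OF assms, of k] by (simp add: algebra_simps)
  show "a_idx N (k + m * int N) = a_idx N k + m" "b_idx N (k + m * int N) = b_idx N k"
    unfolding k using idx_of_decomp[OF assms, of "int (b_idx N k) - 1" "a_idx N k + m"]
      b_idx_in_range[OF assms, of k] by auto
qed

lemma a_idx_nonpos:
  assumes "N > 0" "k \<le> int N"
  shows "a_idx N k \<le> 0"
proof (rule ccontr)
  assume "\<not> a_idx N k \<le> 0"
  then have "a_idx N k * int N \<ge> int N"
    using assms(1) by simp
  moreover have "b_idx N k \<ge> 1"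
    using b_idx_in_range[OF assms(1)] by auto
  ultimately show False
    using idx_decomp[OF assms(1), of k] assms(2) by linarith
qed

lemma idx_add_1:
  assumes "N > 0"
  shows "b_idx N k < N \<Longrightarrow> a_idx N (k + 1) = a_idx N k \<and> b_idx N (k + 1) = b_idx N k + 1"
    and "b_idx N k = N \<Longrightarrow> a_idx N (k + 1) = a_idx N k + 1 \<and> b_idx N (k + 1) = 1"
proof -
  assume "b_idx N k < N"
  moreover have "k + 1 = a_idx N k * int N + int (b_idx N k) + 1"
    using idx_decomp[OF assms, of k] by simp
  ultimately show "a_idx N (k + 1) = a_idx N k \<and> b_idx N (k + 1) = b_idx N k + 1"
    using idx_of_decomp[OF assms, of "int (b_idx N k)" "a_idx N k"] by auto
next
  assume "b_idx N k = N"
  then have "k + 1 = (a_idx N k + 1) * int N + 0 + 1"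
    using idx_decomp[OF assms, of k] by (simp add: algebra_simps)
  then show "a_idx N (k + 1) = a_idx N k + 1 \<and> b_idx N (k + 1) = 1"
    using idx_of_decomp[OF assms, of 0 "a_idx N k + 1"] assms by auto
qed

context dde_system
begin

lemma Amul_diff:
  "Amul A ns h \<Delta> N \<mu> s q n - Amul A ns h \<Delta> N \<mu> s w n = Amul A ns h \<Delta> N \<mu> s (\<lambda>m. q m - w m) n"
  by (simp add: Amul_def vector_ssub_ldistrib matrix_vector_mult_diff_distrib sum_subtractf)

lemma norm_Amul_le:
  assumes N: "N > 0"
    and K: "(\<Sum>j\<le>h. abs_entry_sum (A j ((s + real n - 1) * \<Delta>))) \<le> K"
    and C: "\<And>j. j \<le> h \<Longrightarrow> norm (\<mu> powi a_idx N (int n - int (ns j))) \<le> C" "C \<ge> 0"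
    and q: "\<And>m. m \<in> {1..N} \<Longrightarrow> norm (q m) \<le> B"
  shows "norm (Amul A ns h \<Delta> N \<mu> s q n) \<le> \<Delta> * (K * (C * B))"
proof -
  define t where "t = (s + real n - 1) * \<Delta>"
  have "norm (q 1) \<le> B"
    using q N by simp
  then have "B \<ge> 0"
    using norm_ge_zero order_trans by blast
  have "norm (Amul A ns h \<Delta> N \<mu> s q n) \<le> \<Delta> * (\<Sum>j\<le>h. abs_entry_sum (A j t) * (C * B))"
    unfolding Amul_def norm_vector_scalar_mult t_def[symmetric]
  proof (intro mult_mono sum_norm_le)
    fix j assume j: "j \<in> {..h}"
    let ?c = "\<mu> powi a_idx N (int n - int (ns j))" and ?b = "b_idx N (int n - int (ns j))"
    have "norm (cmat (A j t) *v (?c *s q ?b)) \<le> abs_entry_sum (A j t) * (norm ?c * norm (q ?b))"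
      using norm_cmat_mult_le[of "A j t" "?c *s q ?b"] unfolding norm_vector_scalar_mult .
    also have "\<dots> \<le> abs_entry_sum (A j t) * (C * B)"
      using C j q[OF b_idx_in_range[OF N]] by (intro mult_left_mono mult_mono abs_entry_sum_nonneg) auto
    finally show "norm (cmat (A j t) *v (?c *s q ?b)) \<le> abs_entry_sum (A j t) * (C * B)" .
  qed (use Delta_pos in auto)
  also have "\<dots> \<le> \<Delta> * (K * (C * B))"
    unfolding sum_distrib_right[symmetric] t_def
    using K C(2) \<open>B \<ge> 0\<close> Delta_pos by (intro mult_left_mono mult_right_mono) auto
  finally show ?thesis .
qed

lemma causal_lipschitz_Amul:
  assumes N: "N > 0"
  obtains L where "L \<ge> 0" "causal_lipschitz {1..N} 0 1 L (\<lambda>q n s. Amul A ns h \<Delta> N \<mu> s (\<lambda>m. q m s) n)"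
proof -
  obtain K where "K \<ge> 0" and K: "\<And>t. t \<in> {0..real N * \<Delta>} \<Longrightarrow> (\<Sum>j\<le>h. abs_entry_sum (A j t)) \<le> K"
    using coefficient_bound by blast
  define C where "C = (\<Sum>n\<in>{1..N}. \<Sum>j\<le>h. norm (\<mu> powi a_idx N (int n - int (ns j))))"
  have C: "norm (\<mu> powi a_idx N (int n - int (ns j))) \<le> C" if "n \<in> {1..N}" "j \<le> h" for n j
  proof -
    have "norm (\<mu> powi a_idx N (int n - int (ns j))) \<le> (\<Sum>j\<le>h. norm (\<mu> powi a_idx N (int n - int (ns j))))"
      using that by (intro member_le_sum) auto
    also have "\<dots> \<le> C"
      unfolding C_def using that
      by (intro member_le_sum[where f="\<lambda>n. \<Sum>j\<le>h. norm (\<mu> powi a_idx N (int n - int (ns j)))"] sum_nonneg) auto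
    finally show ?thesis .
  qed
  have "C \<ge> 0"
    unfolding C_def by (intro sum_nonneg) auto
  have "causal_lipschitz {1..N} 0 1 (\<Delta> * (K * C)) (\<lambda>q n s. Amul A ns h \<Delta> N \<mu> s (\<lambda>m. q m s) n)"
    unfolding causal_lipschitz_def
  proof (intro allI impI)
    fix q w :: "nat \<Rightarrow> real \<Rightarrow> complex^'d" and n s B
    assume n: "n \<in> {1..N}" and s: "s \<in> {0..1}" and HB: "\<forall>m\<in>{1..N}. \<forall>u\<in>{0..s}. norm (q m u - w m u) \<le> B"
    have "(s + real n - 1) * \<Delta> \<in> {0..real N * \<Delta>}"
      using s n Delta_pos by (auto intro!: mult_right_mono)
    then have "norm (Amul A ns h \<Delta> N \<mu> s (\<lambda>m. q m s - w m s) n) \<le> \<Delta> * (K * (C * B))"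
      by (rule norm_Amul_le[OF N K C[OF n] \<open>C \<ge> 0\<close>]) (use HB s in auto)
    then show "norm (Amul A ns h \<Delta> N \<mu> s (\<lambda>m. q m s) n - Amul A ns h \<Delta> N \<mu> s (\<lambda>m. w m s) n) \<le> \<Delta> * (K * C) * B"
      by (simp add: Amul_diff mult.assoc)
  qed
  moreover have "\<Delta> * (K * C) \<ge> 0"
    using Delta_pos \<open>K \<ge> 0\<close> \<open>C \<ge> 0\<close> by simp
  ultimately show ?thesis
    using that by blast
qed

lemma continuous_on_Amul:
  assumes N: "N > 0" and q: "\<And>m. m \<in> {1..N} \<Longrightarrow> continuous_on S (q m)"
  shows "continuous_on S (\<lambda>s. Amul A ns h \<Delta> N \<mu> s (\<lambda>m. q m s) n)"
  unfolding Amul_def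
proof (intro continuous_intros)
  fix j assume j: "j \<in> {..h}"
  show "continuous_on S (\<lambda>s. A j ((s + real n - 1) * \<Delta>))"
  proof (rule continuous_on_compose2[OF A_continuous])
    show "continuous_on S (\<lambda>s. (s + real n - 1) * \<Delta>)"
      by (intro continuous_intros)
  qed (use j in auto)
  show "continuous_on S (q (b_idx N (int n - int (ns j))))"
    using q b_idx_in_range[OF N] by blast
qed

lemma ode_sol_exists:
  assumes N: "N > 0"
  obtains q where "ode_sol A ns h \<Delta> N \<mu> v q"
proof -
  obtain L where "L \<ge> 0" and lip: "causal_lipschitz {1..N} 0 1 L (\<lambda>q n s. Amul A ns h \<Delta> N \<mu> s (\<lambda>m. q m s) n)"
    using causal_lipschitz_Amul[OF N] by blast
  interpret causal_lipschitz_system "{1..N}" 0 1 L "\<lambda>q n s. Amul A ns h \<Delta> N \<mu> s (\<lambda>m. q m s) n" v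
  proof
    fix y :: "nat \<Rightarrow> real \<Rightarrow> complex^'d" and i
    assume "\<And>j. j \<in> {1..N} \<Longrightarrow> continuous_on {0..1} (y j) \<and> y j 0 = v j"
    then show "continuous_on {0..1} (\<lambda>s. Amul A ns h \<Delta> N \<mu> s (\<lambda>m. y m s) i)"
      using continuous_on_Amul[OF N] by blast
  qed (use \<open>L \<ge> 0\<close> lip in auto)
  obtain q where "\<And>n. n \<in> {1..N} \<Longrightarrow> q n 0 = v n"
    "\<And>n s. n \<in> {1..N} \<Longrightarrow> s \<in> {0..1} \<Longrightarrow>
       (q n has_vector_derivative Amul A ns h \<Delta> N \<mu> s (\<lambda>m. q m s) n) (at s within {0..1})"
    by (rule exists_solution) (rule that)
  then have "ode_sol A ns h \<Delta> N \<mu> v q"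
    unfolding ode_sol_def by blast
  then show ?thesis
    by (rule that)
qed

lemma ode_sol_unique:
  assumes N: "N > 0" and q1: "ode_sol A ns h \<Delta> N \<mu> v q1" and q2: "ode_sol A ns h \<Delta> N \<mu> v q2"
    and n: "n \<in> {1..N}" and s: "s \<in> {0..1}"
  shows "q1 n s = q2 n s"
proof -
  obtain L where "L \<ge> 0" and lip: "causal_lipschitz {1..N} 0 1 L (\<lambda>q n s. Amul A ns h \<Delta> N \<mu> s (\<lambda>m. q m s) n)"
    using causal_lipschitz_Amul[OF N] by blast
  have d1: "\<And>m t. m \<in> {1..N} \<Longrightarrow> t \<in> {0..1} \<Longrightarrow>
      (q1 m has_vector_derivative Amul A ns h \<Delta> N \<mu> t (\<lambda>k. q1 k t) m) (at t within {0..1})"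
    and i1: "\<And>m. m \<in> {1..N} \<Longrightarrow> q1 m 0 = v m"
    using q1 unfolding ode_sol_def by auto
  have d2: "\<And>m t. m \<in> {1..N} \<Longrightarrow> t \<in> {0..1} \<Longrightarrow>
      (q2 m has_vector_derivative Amul A ns h \<Delta> N \<mu> t (\<lambda>k. q2 k t) m) (at t within {0..1})"
    and i2: "\<And>m. m \<in> {1..N} \<Longrightarrow> q2 m 0 = v m"
    using q2 unfolding ode_sol_def by auto
  show ?thesis
    by (rule causal_lipschitz_unique[OF _ \<open>L \<ge> 0\<close> lip d1 d2 _ n s]) (simp_all add: i1 i2)
qed

lemma ode_q_eqI:
  assumes "N > 0" "ode_sol A ns h \<Delta> N \<mu> v q" "n \<in> {1..N}" "s \<in> {0..1}"
  shows "ode_q A ns h \<Delta> N \<mu> v n s = q n s"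
  unfolding ode_q_def
proof (rule the_equality)
  show "\<exists>q'. ode_sol A ns h \<Delta> N \<mu> v q' \<and> q' n s = q n s"
    using assms(2) by blast
  fix y assume "\<exists>q'. ode_sol A ns h \<Delta> N \<mu> v q' \<and> q' n s = y"
  then show "y = q n s"
    using ode_sol_unique[OF assms(1) _ assms(2-4)] by blast
qed

end

section \<open>Eigenfunctions of the monodromy operator\<close>

locale periodic_dde = dde_system A ns h \<Delta>
  for A :: "nat \<Rightarrow> real \<Rightarrow> real^'d^'d" and ns h \<Delta> +
  fixes N :: nat and \<mu> :: complex
  assumes N_pos: "N > 0"
    and A_periodic: "\<And>j t. j \<le> h \<Longrightarrow> A j (t + real N * \<Delta>) = A j t"
    and mu_nonzero: "\<mu> \<noteq> 0"
begin

lemma A_periodic_int: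
  assumes j: "j \<le> h"
  shows "A j (t + of_int m * (real N * \<Delta>)) = A j t"
proof -
  have periodic_nat: "A j (t + real k * (real N * \<Delta>)) = A j t" for k t
  proof (induction k)
    case (Suc k)
    then show ?case
      using A_periodic[OF j, of "t + real k * (real N * \<Delta>)"] by (simp add: algebra_simps)
  qed simp
  show ?thesis
  proof (cases "m \<ge> 0")
    case True
    then show ?thesis using periodic_nat[of t "nat m"] by simp
  next
    case False
    then show ?thesis
      using periodic_nat[of "t + of_int m * (real N * \<Delta>)" "nat (- m)"] by (simp add: algebra_simps)
  qed
qed

lemma dde_sol_shift_period:
  assumes "dde_sol A ns h \<Delta> 0 \<phi> x"
  shows "dde_sol A ns h \<Delta> 0 (\<lambda>\<theta>. x (real N * \<Delta> + \<theta>)) (\<lambda>t. x (t + real N * \<Delta>))"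
  unfolding dde_sol_def
proof (intro conjI ballI allI impI)
  note x = dde_solD[OF assms]
  have T: "real N * \<Delta> \<ge> 0"
    using Delta_pos by simp
  show "continuous_on {0 - tau ns \<Delta> h..} (\<lambda>t. x (t + real N * \<Delta>))"
    using T by (intro continuous_on_compose2[OF x(1)] continuous_intros) auto
  show "x (t + real N * \<Delta>) = x (real N * \<Delta> + (t - 0))" for t
    by (simp add: add.commute)
  fix t :: real assume t: "t \<ge> 0"
  have "(x has_vector_derivative rhs x (t + real N * \<Delta>)) (at (t + real N * \<Delta>) within (\<lambda>t. t + real N * \<Delta>) ` {0..})"
    using t T by (intro has_vector_derivative_within_subset[OF x(3)]) auto
  then have "((x \<circ> (\<lambda>t. t + real N * \<Delta>)) has_vector_derivative 1 *\<^sub>R rhs x (t + real N * \<Delta>)) (at t within {0..})"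
    by (rule vector_diff_chain_within[rotated]) (auto intro!: derivative_eq_intros)
  then have "((\<lambda>t. x (t + real N * \<Delta>)) has_vector_derivative rhs x (t + real N * \<Delta>)) (at t within {0..})"
    by (simp add: o_def)
  moreover have "rhs x (t + real N * \<Delta>) = (\<Sum>j\<le>h. cmat (A j t) *v x (t - tau ns \<Delta> j + real N * \<Delta>))"
    unfolding rhs_def using A_periodic by (intro sum.cong refl) (simp add: algebra_simps)
  ultimately show "((\<lambda>t. x (t + real N * \<Delta>)) has_vector_derivative
      (\<Sum>j\<le>h. cmat (A j t) *v x (t - tau ns \<Delta> j + real N * \<Delta>))) (at t within {0..})"
    by simp
qed

context
  fixes \<phi> x
  assumes x: "dde_sol A ns h \<Delta> 0 \<phi> x"
    and eigen: "\<And>\<theta>. \<theta> \<in> {- tau ns \<Delta> h..0} \<Longrightarrow> dde_x A ns h \<Delta> 0 \<phi> (real N * \<Delta> + \<theta>) = \<mu> *s \<phi> \<theta>"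
begin

text \<open>Both sides solve the equation with initial function \<open>\<mu> \<phi>\<close>.\<close>
lemma sol_shift_period:
  assumes "t \<ge> - tau ns \<Delta> h"
  shows "x (t + real N * \<Delta>) = \<mu> *s x t"
proof (rule dde_sol_unique[OF _ dde_sol_scale[OF x] assms])
  have "x (real N * \<Delta> + \<theta>) = \<mu> *s \<phi> \<theta>" if "\<theta> \<in> {- tau ns \<Delta> h..0}" for \<theta>
  proof -
    have "real N * \<Delta> + \<theta> \<ge> - tau ns \<Delta> h"
      using that Delta_pos by (simp add: add_increasing)
    then show ?thesis
      using eigen[OF that] dde_x_eqI[OF x] by simp
  qed
  then show "dde_sol A ns h \<Delta> 0 (\<lambda>\<theta>. \<mu> *s \<phi> \<theta>) (\<lambda>t. x (t + real N * \<Delta>))"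
    using dde_sol_shift_period[OF x] unfolding dde_sol_def by simp
qed

lemma sol_shift_periods:
  assumes "t \<ge> - tau ns \<Delta> h"
  shows "x (t + real m * (real N * \<Delta>)) = \<mu> ^ m *s x t"
proof (induction m)
  case (Suc m)
  have "t + real m * (real N * \<Delta>) \<ge> - tau ns \<Delta> h"
    using assms Delta_pos by (simp add: add_increasing2)
  then have "x (t + real m * (real N * \<Delta>) + real N * \<Delta>) = \<mu> *s x (t + real m * (real N * \<Delta>))"
    by (rule sol_shift_period)
  then show ?case
    using Suc by (simp add: algebra_simps vector_smult_assoc)
qed simp

text \<open>Delayed arguments are brought back into the first period \<open>[0, T]\<close>; this is where
  the powers \<open>\<mu>\<^sup>a\<close> in \<open>A(s, \<mu>)\<close> come from.\<close>
lemma sol_reduce_to_period: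
  assumes s: "s \<ge> 0" and k: "(s + of_int k - 1) * \<Delta> \<ge> - tau ns \<Delta> h" "k \<le> int N"
  shows "x ((s + of_int k - 1) * \<Delta>) = \<mu> powi a_idx N k *s x ((s + real (b_idx N k) - 1) * \<Delta>)"
proof -
  define a where "a = a_idx N k"
  define m where "m = nat (- a)"
  have a: "a \<le> 0"
    unfolding a_def using N_pos k(2) by (rule a_idx_nonpos)
  have "real_of_int k = of_int a * real N + real (b_idx N k)"
    using arg_cong[OF idx_decomp[OF N_pos, of k], of real_of_int] unfolding a_def by simp
  moreover have "real m = - of_int a"
    using a unfolding m_def by simp
  ultimately have "(s + of_int k - 1) * \<Delta> + real m * (real N * \<Delta>) = (s + real (b_idx N k) - 1) * \<Delta>"
    by (simp add: algebra_simps)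
  then have "x ((s + real (b_idx N k) - 1) * \<Delta>) = \<mu> ^ m *s x ((s + of_int k - 1) * \<Delta>)"
    using sol_shift_periods[OF k(1), of m] by simp
  moreover have "\<mu> powi a * \<mu> ^ m = 1"
    using a mu_nonzero unfolding m_def by (simp add: power_int_add[symmetric] flip: power_int_of_nat)
  ultimately show ?thesis
    unfolding a_def[symmetric] by (simp add: vector_smult_assoc)
qed

lemma sol_blocks_ode_sol:
  "ode_sol A ns h \<Delta> N \<mu> (\<lambda>m. x ((real m - 1) * \<Delta>)) (\<lambda>m s. x ((s + real m - 1) * \<Delta>))"
  unfolding ode_sol_def
proof (intro ballI conjI)
  fix n assume n: "n \<in> {1..N}"
  show "x ((0 + real n - 1) * \<Delta>) = x ((real n - 1) * \<Delta>)"
    by simp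
  fix s :: real assume s: "s \<in> {0..1}"
  define f where "f s = (s + real n - 1) * \<Delta>" for s
  have fs: "f s \<ge> 0"
    using s n Delta_pos unfolding f_def by auto
  have "(f has_vector_derivative \<Delta>) (at s within {0..1})"
    unfolding f_def by (auto intro!: derivative_eq_intros)
  moreover have "(x has_vector_derivative rhs x (f s)) (at (f s) within f ` {0..1})"
    using n Delta_pos by (intro has_vector_derivative_within_subset[OF dde_solD(3)[OF x fs]]) (auto simp: f_def)
  ultimately have "((x \<circ> f) has_vector_derivative \<Delta> *\<^sub>R rhs x (f s)) (at s within {0..1})"
    by (rule vector_diff_chain_within)
  moreover have "\<Delta> *\<^sub>R rhs x (f s) = Amul A ns h \<Delta> N \<mu> s (\<lambda>m. x ((s + real m - 1) * \<Delta>)) n"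
    unfolding Amul_def scaleR_eq_of_real_vector_scalar_mult rhs_def
  proof (intro arg_cong2[where f="(*s)"] refl sum.cong)
    fix j assume j: "j \<in> {..h}"
    define k where "k = int n - int (ns j)"
    have "(s + of_int k - 1) * \<Delta> \<ge> - real (ns h) * \<Delta>"
      using s n Delta_pos ns_le_ns_h[of j] j unfolding k_def by (intro mult_right_mono) auto
    then have "x ((s + of_int k - 1) * \<Delta>) = \<mu> powi a_idx N k *s x ((s + real (b_idx N k) - 1) * \<Delta>)"
      using s n unfolding k_def by (intro sol_reduce_to_period) (auto simp: tau_def)
    moreover have "f s - tau ns \<Delta> j = (s + of_int k - 1) * \<Delta>"
      unfolding f_def k_def tau_def by (simp add: algebra_simps)
    ultimately show "cmat (A j (f s)) *v x (f s - tau ns \<Delta> j) =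
        cmat (A j ((s + real n - 1) * \<Delta>)) *v
          (\<mu> powi a_idx N (int n - int (ns j)) *s x ((s + real (b_idx N (int n - int (ns j))) - 1) * \<Delta>))"
      by (simp add: f_def k_def)
  qed
  ultimately show "((\<lambda>s. x ((s + real n - 1) * \<Delta>)) has_vector_derivative
      Amul A ns h \<Delta> N \<mu> s (\<lambda>m. x ((s + real m - 1) * \<Delta>)) n) (at s within {0..1})"
    by (simp add: f_def o_def)
qed

end

theorem eigenfunction_imp_charN_eq_0:
  assumes \<phi>: "continuous_on {- tau ns \<Delta> h..0} \<phi>"
    and eigen: "\<And>\<theta>. \<theta> \<in> {- tau ns \<Delta> h..0} \<Longrightarrow> dde_x A ns h \<Delta> 0 \<phi> (real N * \<Delta> + \<theta>) = \<mu> *s \<phi> \<theta>"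
    and n: "n \<in> {1..N}"
  shows "charN A ns h \<Delta> N \<mu> (\<lambda>m. dde_x A ns h \<Delta> 0 \<phi> ((real m - 1) * \<Delta>)) n = 0"
proof -
  obtain x where x: "dde_sol A ns h \<Delta> 0 \<phi> x"
    using dde_sol_exists[OF \<phi>] by blast
  have dde_x_eq: "dde_x A ns h \<Delta> 0 \<phi> t = x t" if "t \<ge> 0" for t
    using that tau_nonneg[of h] by (intro dde_x_eqI[OF x]) auto
  define v where "v m = dde_x A ns h \<Delta> 0 \<phi> ((real m - 1) * \<Delta>)" for m :: nat
  have v: "v m = x ((real m - 1) * \<Delta>)" if "m \<in> {1..N}" for m
    unfolding v_def using that Delta_pos by (intro dde_x_eq) auto
  have q: "ode_sol A ns h \<Delta> N \<mu> v (\<lambda>m s. x ((s + real m - 1) * \<Delta>))"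
    using sol_blocks_ode_sol[OF x eigen] v unfolding ode_sol_def by simp
  have "ode_q A ns h \<Delta> N \<mu> v n 1 = x (real n * \<Delta>)"
    using ode_q_eqI[OF N_pos q n, of 1] by simp
  moreover have "Bmul N \<mu> v n = x (real n * \<Delta>)"
  proof (cases "n < N")
    case True
    then show ?thesis
      using v[of "Suc n"] n by (simp add: Bmul_def)
  next
    case False
    then have "n = N"
      using n by simp
    then show ?thesis
      using False v[of 1] N_pos sol_shift_period[OF x eigen, of 0] tau_nonneg[of h] by (simp add: Bmul_def)
  qed
  ultimately show ?thesis
    unfolding charN_def v_def by simp
qed

text \<open>\<open>block_ext v k\<close> is the paper's \<open>\<mu>\<^sup>a\<^sub>k q\<^sub>b\<^sub>k\<close>, defined for every integer \<open>k\<close>; \<open>floquet_ext v\<close>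
  runs through these blocks on consecutive intervals of length \<open>\<Delta>\<close> and extends \<open>\<phi>\<close>-hat to the
  whole real line.\<close>
definition block_ext :: "(nat \<Rightarrow> complex^'d) \<Rightarrow> int \<Rightarrow> real \<Rightarrow> complex^'d" where
  "block_ext v k s = \<mu> powi a_idx N k *s ode_q A ns h \<Delta> N \<mu> v (b_idx N k) s"

definition floquet_ext :: "(nat \<Rightarrow> complex^'d) \<Rightarrow> real \<Rightarrow> complex^'d" where
  "floquet_ext v t = block_ext v (\<lfloor>t / \<Delta>\<rfloor> + 1) (t / \<Delta> - of_int \<lfloor>t / \<Delta>\<rfloor>)"

lemma block_ext_add_mult_N: "block_ext v (k + m * int N) s = \<mu> powi m *s block_ext v k s"
proof -
  have "\<mu> powi (a_idx N k + m) = \<mu> powi m * \<mu> powi a_idx N k"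
    using mu_nonzero by (simp add: power_int_add mult.commute)
  then show ?thesis
    unfolding block_ext_def idx_add_mult[OF N_pos] by (simp add: vector_smult_assoc)
qed

lemma block_ext_has_vector_derivative:
  assumes s: "s \<in> {0..1}"
  shows "(block_ext v k has_vector_derivative
      \<mu> powi a_idx N k *s Amul A ns h \<Delta> N \<mu> s (\<lambda>m. ode_q A ns h \<Delta> N \<mu> v m s) (b_idx N k)) (at s within {0..1})"
proof -
  obtain q where q: "ode_sol A ns h \<Delta> N \<mu> v q"
    using ode_sol_exists[OF N_pos] by blast
  have Q: "ode_q A ns h \<Delta> N \<mu> v m u = q m u" if "m \<in> {1..N}" "u \<in> {0..1}" for m u
    using ode_q_eqI[OF N_pos q that] .
  have b: "b_idx N k \<in> {1..N}"
    using b_idx_in_range[OF N_pos] .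
  have Amul: "Amul A ns h \<Delta> N \<mu> s (\<lambda>m. ode_q A ns h \<Delta> N \<mu> v m s) (b_idx N k) = Amul A ns h \<Delta> N \<mu> s (\<lambda>m. q m s) (b_idx N k)"
    unfolding Amul_def using Q[OF b_idx_in_range[OF N_pos] s] by simp
  have "(q (b_idx N k) has_vector_derivative Amul A ns h \<Delta> N \<mu> s (\<lambda>m. q m s) (b_idx N k)) (at s within {0..1})"
    using q b s unfolding ode_sol_def by simp
  then have "(ode_q A ns h \<Delta> N \<mu> v (b_idx N k) has_vector_derivative
      Amul A ns h \<Delta> N \<mu> s (\<lambda>m. ode_q A ns h \<Delta> N \<mu> v m s) (b_idx N k)) (at s within {0..1})"
    unfolding Amul by (rule has_vector_derivative_transform[OF s, rotated]) (rule Q[OF b])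
  then show ?thesis
    unfolding block_ext_def[abs_def]
    by (rule bounded_linear.has_vector_derivative[OF bounded_linear_vector_scalar_mult])
qed

context
  fixes v
  assumes charN_zero: "\<And>n. n \<in> {1..N} \<Longrightarrow> charN A ns h \<Delta> N \<mu> v n = 0"
begin

text \<open>Consecutive blocks join continuously exactly because \<open>q(1) = B(\<mu>) v\<close>.\<close>
lemma block_ext_1_eq_0: "block_ext v k 1 = block_ext v (k + 1) 0"
proof -
  have q1: "ode_q A ns h \<Delta> N \<mu> v n 1 = Bmul N \<mu> v n" if "n \<in> {1..N}" for n
    using charN_zero[OF that] unfolding charN_def by simp
  obtain q where q: "ode_sol A ns h \<Delta> N \<mu> v q"
    using ode_sol_exists[OF N_pos] by blast
  have q0: "ode_q A ns h \<Delta> N \<mu> v n 0 = v n" if "n \<in> {1..N}" for n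
    using ode_q_eqI[OF N_pos q that, of 0] q that unfolding ode_sol_def by simp
  have b: "b_idx N k \<in> {1..N}"
    using b_idx_in_range[OF N_pos] .
  show ?thesis
  proof (cases "b_idx N k < N")
    case True
    then show ?thesis
      using idx_add_1(1)[OF N_pos True] q1[OF b] q0[of "b_idx N k + 1"] b
      by (simp add: block_ext_def Bmul_def)
  next
    case False
    then have "b_idx N k = N"
      using b by simp
    then show ?thesis
      using idx_add_1(2)[OF N_pos] q1[OF b] q0[of 1] N_pos mu_nonzero
      by (simp add: block_ext_def Bmul_def vector_smult_assoc power_int_add_1)
  qed
qed

lemma floquet_ext_eq:
  assumes s: "s \<in> {0..1}"
  shows "floquet_ext v ((of_int k - 1 + s) * \<Delta>) = block_ext v k s"
proof (cases "s < 1")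
  case True
  then have "\<lfloor>of_int k - 1 + s\<rfloor> = k - 1"
    using s by (simp add: floor_eq_iff)
  then show ?thesis
    unfolding floquet_ext_def using Delta_pos by simp
next
  case False
  then have "s = 1"
    using s by simp
  then show ?thesis
    unfolding floquet_ext_def using Delta_pos block_ext_1_eq_0 by simp
qed

lemma floquet_ext_eq_floor:
  obtains k s where "s \<in> {0..1}" "t = (of_int k - 1 + s) * \<Delta>"
proof
  show "t / \<Delta> - of_int \<lfloor>t / \<Delta>\<rfloor> \<in> {0..1}"
    by (auto simp: floor_le_iff) linarith
  show "t = (of_int (\<lfloor>t / \<Delta>\<rfloor> + 1) - 1 + (t / \<Delta> - of_int \<lfloor>t / \<Delta>\<rfloor>)) * \<Delta>"
    using Delta_pos by simp
qed

lemma floquet_ext_add_period: "floquet_ext v (real N * \<Delta> + t) = \<mu> *s floquet_ext v t"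
proof -
  obtain k s where s: "s \<in> {0..1}" and t: "t = (of_int k - 1 + s) * \<Delta>"
    by (rule floquet_ext_eq_floor)
  have "real N * \<Delta> + t = (of_int (k + int N) - 1 + s) * \<Delta>"
    unfolding t by (simp add: algebra_simps)
  then have "floquet_ext v (real N * \<Delta> + t) = block_ext v (k + int N) s"
    using floquet_ext_eq[OF s, of "k + int N"] by (simp only:)
  also have "\<dots> = \<mu> *s floquet_ext v t"
    unfolding t floquet_ext_eq[OF s] using block_ext_add_mult_N[of v k 1 s] by simp
  finally show ?thesis .
qed

lemma floquet_ext_delayed:
  assumes s: "s \<in> {0..1}"
  shows "floquet_ext v ((of_int k - 1 + s) * \<Delta> - tau ns \<Delta> j) =
    \<mu> powi a_idx N k *s block_ext v (int (b_idx N k) - int (ns j)) s"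
proof -
  have "(of_int k - 1 + s) * \<Delta> - tau ns \<Delta> j =
      (of_int (int (b_idx N k) - int (ns j) + a_idx N k * int N) - 1 + s) * \<Delta>"
    using arg_cong[OF idx_decomp[OF N_pos, of k], of real_of_int] by (simp add: tau_def algebra_simps)
  then have "floquet_ext v ((of_int k - 1 + s) * \<Delta> - tau ns \<Delta> j) =
      block_ext v (int (b_idx N k) - int (ns j) + a_idx N k * int N) s"
    using floquet_ext_eq[OF s] by (simp only:)
  then show ?thesis
    unfolding block_ext_add_mult_N .
qed

lemma rhs_floquet_ext:
  assumes s: "s \<in> {0..1}"
  shows "rhs (floquet_ext v) ((of_int k - 1 + s) * \<Delta>) =
    (1 / \<Delta>) *\<^sub>R (\<mu> powi a_idx N k *s Amul A ns h \<Delta> N \<mu> s (\<lambda>m. ode_q A ns h \<Delta> N \<mu> v m s) (b_idx N k))"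
proof -
  define a where "a = a_idx N k"
  define b where "b = b_idx N k"
  have "complex_of_real (1 / \<Delta>) * complex_of_real \<Delta> = 1"
    using Delta_pos by (simp flip: of_real_mult)
  then have scale: "(1 / \<Delta>) *\<^sub>R (\<mu> powi a *s (complex_of_real \<Delta> *s X)) = \<mu> powi a *s X" for X :: "complex^'d"
    using Delta_pos by (simp add: scaleR_eq_of_real_vector_scalar_mult vector_smult_assoc mult.left_commute[of "complex_of_real (1 / \<Delta>)"])
  have "(1 / \<Delta>) *\<^sub>R (\<mu> powi a *s Amul A ns h \<Delta> N \<mu> s (\<lambda>m. ode_q A ns h \<Delta> N \<mu> v m s) b) =
      \<mu> powi a *s (\<Sum>j\<le>h. cmat (A j ((s + real b - 1) * \<Delta>)) *v
        (\<mu> powi a_idx N (int b - int (ns j)) *s ode_q A ns h \<Delta> N \<mu> v (b_idx N (int b - int (ns j))) s))"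
    unfolding Amul_def scale ..
  also have "\<dots> = (\<Sum>j\<le>h. cmat (A j ((s + real b - 1) * \<Delta>)) *v
        (\<mu> powi a *s (\<mu> powi a_idx N (int b - int (ns j)) *s ode_q A ns h \<Delta> N \<mu> v (b_idx N (int b - int (ns j))) s)))"
    unfolding vec.scale_sum_right vector_scalar_commute ..
  also have "\<dots> = rhs (floquet_ext v) ((of_int k - 1 + s) * \<Delta>)"
    unfolding rhs_def
  proof (rule sum.cong[OF refl])
    fix j assume j: "j \<in> {..h}"
    have "(of_int k - 1 + s) * \<Delta> = (s + real b - 1) * \<Delta> + of_int a * (real N * \<Delta>)"
      using arg_cong[OF idx_decomp[OF N_pos, of k], of real_of_int]
      unfolding a_def b_def by (simp add: algebra_simps)
    then have "A j ((s + real b - 1) * \<Delta>) = A j ((of_int k - 1 + s) * \<Delta>)"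
      using A_periodic_int j by simp
    with floquet_ext_delayed[OF s, of k j]
    show "cmat (A j ((s + real b - 1) * \<Delta>)) *v
        (\<mu> powi a *s (\<mu> powi a_idx N (int b - int (ns j)) *s ode_q A ns h \<Delta> N \<mu> v (b_idx N (int b - int (ns j))) s)) =
      cmat (A j ((of_int k - 1 + s) * \<Delta>)) *v floquet_ext v ((of_int k - 1 + s) * \<Delta> - tau ns \<Delta> j)"
      unfolding a_def b_def by (simp add: block_ext_def)
  qed
  finally show ?thesis
    unfolding a_def b_def ..
qed

lemma floquet_ext_has_vector_derivative_on_step:
  assumes t: "t \<in> {(of_int k - 1) * \<Delta>..of_int k * \<Delta>}"
  shows "(floquet_ext v has_vector_derivative rhs (floquet_ext v) t) (at t within {(of_int k - 1) * \<Delta>..of_int k * \<Delta>})"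
proof -
  define I where "I = {(of_int k - 1) * \<Delta>..of_int k * \<Delta>}"
  define g where "g u = u / \<Delta> - (of_int k - 1)" for u
  have g: "g u \<in> {0..1}" if "u \<in> I" for u
    using that Delta_pos unfolding g_def I_def by (auto simp: field_simps)
  have u: "u = (of_int k - 1 + g u) * \<Delta>" for u
    unfolding g_def using Delta_pos by simp
  let ?D = "\<mu> powi a_idx N k *s Amul A ns h \<Delta> N \<mu> (g t) (\<lambda>m. ode_q A ns h \<Delta> N \<mu> v m (g t)) (b_idx N k)"
  have "(g has_vector_derivative 1 / \<Delta>) (at t within I)"
    unfolding g_def by (auto intro!: derivative_eq_intros simp: divide_inverse)
  moreover have "(block_ext v k has_vector_derivative ?D) (at (g t) within g ` I)"
    using g t unfolding I_def[symmetric]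
    by (intro has_vector_derivative_within_subset[OF block_ext_has_vector_derivative]) auto
  ultimately have "((block_ext v k \<circ> g) has_vector_derivative (1 / \<Delta>) *\<^sub>R ?D) (at t within I)"
    by (rule vector_diff_chain_within)
  moreover have "rhs (floquet_ext v) t = (1 / \<Delta>) *\<^sub>R ?D"
  proof -
    have "rhs (floquet_ext v) t = rhs (floquet_ext v) ((of_int k - 1 + g t) * \<Delta>)"
      using arg_cong[OF u[of t], of "rhs (floquet_ext v)"] .
    also have "\<dots> = (1 / \<Delta>) *\<^sub>R ?D"
      using t unfolding I_def[symmetric] by (intro rhs_floquet_ext g)
    finally show ?thesis .
  qed
  moreover have "floquet_ext v u = (block_ext v k \<circ> g) u" if "u \<in> I" for u
    using arg_cong[OF u[of u], of "floquet_ext v"] floquet_ext_eq[OF g[OF that], of k] by simp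
  ultimately show ?thesis
    using t unfolding I_def[symmetric] by (metis has_vector_derivative_transform)
qed

lemma floquet_ext_has_vector_derivative: "(floquet_ext v has_vector_derivative rhs (floquet_ext v) t) (at t)"
proof -
  define k where "k = \<lfloor>t / \<Delta>\<rfloor> + 1"
  have t: "t \<in> {(of_int k - 1) * \<Delta>..<of_int k * \<Delta>}"
    unfolding k_def using floor_divide_lower[OF Delta_pos, of t] floor_divide_upper[OF Delta_pos, of t] by simp
  show ?thesis
  proof (cases "t = (of_int k - 1) * \<Delta>")
    case True
    have "(floquet_ext v has_vector_derivative rhs (floquet_ext v) t)
        (at t within {(of_int (k - 1) - 1) * \<Delta>..of_int (k - 1) * \<Delta>} \<union> {(of_int k - 1) * \<Delta>..of_int k * \<Delta>})"
      using True t Delta_pos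
      by (intro has_vector_derivative_within_Un floquet_ext_has_vector_derivative_on_step) auto
    moreover have "{(of_int (k - 1) - 1) * \<Delta>..of_int (k - 1) * \<Delta>} \<union> {(of_int k - 1) * \<Delta>..of_int k * \<Delta>} =
        {(of_int k - 2) * \<Delta>..of_int k * \<Delta>}"
      using Delta_pos by (auto simp: algebra_simps)
    moreover have "at t within {(of_int k - 2) * \<Delta>..of_int k * \<Delta>} = at t"
      using True Delta_pos by (intro at_within_Icc_at) (auto simp: algebra_simps)
    ultimately show ?thesis
      by simp
  next
    case False
    have "at t within {(of_int k - 1) * \<Delta>..of_int k * \<Delta>} = at t"
      using False t by (intro at_within_Icc_at) auto
    then show ?thesis
      using floquet_ext_has_vector_derivative_on_step[of t k] t by simp
  qed
qed

lemma phi_hat_eq_floquet_ext: "phi_hat A ns h \<Delta> N \<mu> v = floquet_ext v"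
proof
  fix t
  define n where "n = (if t = - tau ns \<Delta> h then 1 - int (ns h) else \<lceil>t / \<Delta>\<rceil>)"
  define s where "s = t / \<Delta> - of_int (n - 1)"
  have s01: "s \<in> {0..1}"
  proof (cases "t = - tau ns \<Delta> h")
    case True
    then show ?thesis
      using Delta_pos by (simp add: s_def n_def tau_def)
  next
    case False
    then show ?thesis
      unfolding s_def n_def by (auto simp: algebra_simps) linarith+
  qed
  have "t = (of_int n - 1 + s) * \<Delta>"
    using Delta_pos by (simp add: s_def)
  then have "floquet_ext v t = floquet_ext v ((of_int n - 1 + s) * \<Delta>)"
    by (rule arg_cong)
  also have "\<dots> = block_ext v n s"
    by (rule floquet_ext_eq[OF s01])
  also have "\<dots> = phi_hat A ns h \<Delta> N \<mu> v t"
    by (simp add: phi_hat_def block_ext_def Let_def n_def s_def)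
  finally show "phi_hat A ns h \<Delta> N \<mu> v t = floquet_ext v t" ..
qed

lemma floquet_ext_dde_sol: "dde_sol A ns h \<Delta> 0 (phi_hat A ns h \<Delta> N \<mu> v) (floquet_ext v)"
  unfolding dde_sol_def phi_hat_eq_floquet_ext
proof (intro conjI ballI allI impI)
  show "continuous_on {0 - tau ns \<Delta> h..} (floquet_ext v)"
    using floquet_ext_has_vector_derivative has_vector_derivative_continuous
    by (blast intro: continuous_at_imp_continuous_on)
  show "floquet_ext v t = floquet_ext v (t - 0)" for t
    by simp
  show "(floquet_ext v has_vector_derivative (\<Sum>j\<le>h. cmat (A j t) *v floquet_ext v (t - tau ns \<Delta> j))) (at t within {0..})" for t
    using has_vector_derivative_at_within[OF floquet_ext_has_vector_derivative] by (simp add: rhs_def)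
qed

theorem charN_eq_0_imp_eigenfunction:
  shows "continuous_on {- tau ns \<Delta> h..0} (phi_hat A ns h \<Delta> N \<mu> v)"
    and "\<And>\<theta>. \<theta> \<in> {- tau ns \<Delta> h..0} \<Longrightarrow>
      dde_x A ns h \<Delta> 0 (phi_hat A ns h \<Delta> N \<mu> v) (real N * \<Delta> + \<theta>) = \<mu> *s phi_hat A ns h \<Delta> N \<mu> v \<theta>"
proof -
  show "continuous_on {- tau ns \<Delta> h..0} (phi_hat A ns h \<Delta> N \<mu> v)"
    using dde_solD(1)[OF floquet_ext_dde_sol] unfolding phi_hat_eq_floquet_ext
    by (rule continuous_on_subset) auto
  fix \<theta> assume \<theta>: "\<theta> \<in> {- tau ns \<Delta> h..0}"
  then have "real N * \<Delta> + \<theta> \<ge> - tau ns \<Delta> h"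
    using Delta_pos by (simp add: add_increasing)
  then show "dde_x A ns h \<Delta> 0 (phi_hat A ns h \<Delta> N \<mu> v) (real N * \<Delta> + \<theta>) = \<mu> *s phi_hat A ns h \<Delta> N \<mu> v \<theta>"
    using dde_x_eqI[OF floquet_ext_dde_sol] floquet_ext_add_period unfolding phi_hat_eq_floquet_ext by simp
qed

end

end

theorem theorem2p2:
  fixes A :: "nat \<Rightarrow> real \<Rightarrow> real^'d^'d"
    and ns :: "nat \<Rightarrow> nat" and h N :: nat and \<Delta> :: real and \<mu> :: complex
  assumes Delta_pos: "\<Delta> > 0"
    and N_pos: "N > 0"
    and ns0: "ns 0 = 0"
    and ns_mono: "\<And>j. 1 \<le> j \<Longrightarrow> j < h \<Longrightarrow> ns j < ns (Suc j)"
    and smooth: "\<And>j. j \<le> h \<Longrightarrow> smooth_fun (A j)"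
    and periodic: "\<And>j t. j \<le> h \<Longrightarrow> A j (t + real N * \<Delta>) = A j t"
    and mu_nz: "\<mu> \<noteq> 0"
  shows
    "(\<forall>\<phi> :: real \<Rightarrow> complex^'d.
        continuous_on {- tau ns \<Delta> h..0} \<phi> \<longrightarrow>
        (\<exists>\<theta>\<in>{- tau ns \<Delta> h..0}. \<phi> \<theta> \<noteq> 0) \<longrightarrow>
        (\<forall>\<theta>\<in>{- tau ns \<Delta> h..0}. dde_x A ns h \<Delta> 0 \<phi> (real N * \<Delta> + \<theta>) = \<mu> *s \<phi> \<theta>) \<longrightarrow>
        (\<forall>n\<in>{1..N}. charN A ns h \<Delta> N \<mu>
            (\<lambda>m. dde_x A ns h \<Delta> 0 \<phi> ((real m - 1) * \<Delta>)) n = 0))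
     \<and>
     (\<forall>v :: nat \<Rightarrow> complex^'d.
        (\<exists>n\<in>{1..N}. v n \<noteq> 0) \<longrightarrow>
        (\<forall>n\<in>{1..N}. charN A ns h \<Delta> N \<mu> v n = 0) \<longrightarrow>
        (let \<phi> = phi_hat A ns h \<Delta> N \<mu> v in
           continuous_on {- tau ns \<Delta> h..0} \<phi> \<and>
           (\<forall>\<theta>\<in>{- tau ns \<Delta> h..0}. dde_x A ns h \<Delta> 0 \<phi> (real N * \<Delta> + \<theta>) = \<mu> *s \<phi> \<theta>)))"
proof -
  interpret periodic_dde A ns h \<Delta> N \<mu>
    using Delta_pos ns0 ns_mono smooth_fun_continuous_on[OF smooth] N_pos periodic mu_nz
    by unfold_locales auto
  show ?thesis
  proof (intro conjI allI impI ballI)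
    fix \<phi> :: "real \<Rightarrow> complex^'d" and n
    assume "continuous_on {- tau ns \<Delta> h..0} \<phi>"
      and "\<forall>\<theta>\<in>{- tau ns \<Delta> h..0}. dde_x A ns h \<Delta> 0 \<phi> (real N * \<Delta> + \<theta>) = \<mu> *s \<phi> \<theta>"
      and "n \<in> {1..N}"
    then show "charN A ns h \<Delta> N \<mu> (\<lambda>m. dde_x A ns h \<Delta> 0 \<phi> ((real m - 1) * \<Delta>)) n = 0"
      by (intro eigenfunction_imp_charN_eq_0) auto
  next
    fix v :: "nat \<Rightarrow> complex^'d"
    assume "\<forall>n\<in>{1..N}. charN A ns h \<Delta> N \<mu> v n = 0"
    then show "let \<phi> = phi_hat A ns h \<Delta> N \<mu> v in
        continuous_on {- tau ns \<Delta> h..0} \<phi> \<and>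
        (\<forall>\<theta>\<in>{- tau ns \<Delta> h..0}. dde_x A ns h \<Delta> 0 \<phi> (real N * \<Delta> + \<theta>) = \<mu> *s \<phi> \<theta>)"
      using charN_eq_0_imp_eigenfunction[of v] by (simp add: Let_def)
  qed
qed

end
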